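(* Let $\mathcal H$ be a separable Hilbert space and $\mathcal A$ a $C^*$-subalgebra of $\mathbf B(\mathcal H)$ with $\mathbf K(\mathcal H)\subseteq\mathcal A$. Let $A_i,B_i\in\mathcal A$, $i=1,\dots,m$, and let $\Phi=\sum_{i=1}^mM_{A_i,B_i}$ acting on $\mathcal A$. If the operators $B_1,\dots,B_m$ (resp. $A_1,\dots,A_m$) are linearly independent, then there exist $r\in\mathbb N$ and $C>0$ such that for every $n\in\mathbb N$ and every $i=1,\dots,m$, $$s_{rn-r+1}(A_i)\le C\,\mathrm h_n(\Phi)\quad(\text{resp. } s_{rn-r+1}(B_i)\le C\,\mathrm h_n(\Phi)).$$ In particular, if $\mathfrak i$ is a Calkin space and $\mathrm h(\Phi)\in\mathfrak i$, then $s(A_i)\in\mathfrak i$ (resp. $s(B_i)\in\mathfrak i$) for every $i$.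
   Context: $M_{A,B}(X)=AXB$ for $X\in\mathcal A$. For $T\in\mathbf B(\mathcal H)$, $s_n(T)$ denotes its $n$-th singular number, i.e. the approximation number $\inf\{\|T-F\|:\mathrm{rank}F<n\}$ (the usual singular value when $T$ is compact). Hilbert numbers of a bounded operator $T:\mathcal X\to\mathcal Y$ between Banach spaces: $\mathrm h_n(T)=\sup s_n(ATB)$ over all Hilbert spaces $\mathcal H',\mathcal K'$ and contractions $A\in\mathbf B(\mathcal Y,\mathcal H')$, $B\in\mathbf B(\mathcal K',\mathcal X)$. $c_0$: complex null sequences; $\alpha^\star$: non-increasing rearrangement of $(|\alpha_n|)$. A Calkin space is a linear subspace $\mathfrak i\subseteq c_0$ such that $\alpha\in\mathfrak i,\beta\in c_0,\beta^\star\le\alpha^\star$ imply $\beta\in\mathfrak i$. *)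

theory Defs
  imports "HOL-Analysis.Analysis" "HOL-Library.Extended_Nat"
begin

class complex_vector = real_vector +
  fixes scaleC :: "complex \<Rightarrow> 'a \<Rightarrow> 'a" (infixr "*\<^sub>C" 75)
  assumes scaleC_add_right: "a *\<^sub>C (x + y) = a *\<^sub>C x + a *\<^sub>C y"
    and scaleC_add_left: "(a + b) *\<^sub>C x = a *\<^sub>C x + b *\<^sub>C x"
    and scaleC_scaleC: "a *\<^sub>C (b *\<^sub>C x) = (a * b) *\<^sub>C x"
    and scaleC_one: "1 *\<^sub>C x = x"
    and scaleR_scaleC: "r *\<^sub>R x = complex_of_real r *\<^sub>C x"

class complex_inner = complex_vector + real_normed_vector +
  fixes cinner :: "'a \<Rightarrow> 'a \<Rightarrow> complex"
  assumes cinner_commute: "cinner x y = cnj (cinner y x)"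
    and cinner_add_left: "cinner (x + y) z = cinner x z + cinner y z"
    and cinner_scaleC_left: "cinner (c *\<^sub>C x) y = cnj c * cinner x y"
    and cinner_ge_zero: "0 \<le> Re (cinner x x)"
    and cinner_eq_zero_iff: "cinner x x = 0 \<longleftrightarrow> x = 0"
    and norm_eq_sqrt_cinner: "norm x = sqrt (Re (cinner x x))"

class chilbert_space = complex_inner + complete_space

definition separable_type :: "'a::metric_space itself \<Rightarrow> bool" where
  "separable_type (_::'a itself) \<longleftrightarrow> (\<exists>D::'a set. countable D \<and> closure D = UNIV)"

definition cspan :: "'a::complex_vector set \<Rightarrow> 'a set" where
  "cspan V = {y. \<exists>W c. finite W \<and> W \<subseteq> V \<and> y = (\<Sum>v\<in>W. c v *\<^sub>C v)}"

definition cfinite_dim :: "'a::complex_vector itself \<Rightarrow> bool" where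
  "cfinite_dim (_::'a itself) \<longleftrightarrow> (\<exists>V::'a set. finite V \<and> cspan V = UNIV)"

definition clinear :: "('a::complex_vector \<Rightarrow> 'b::complex_vector) \<Rightarrow> bool" where
  "clinear f \<longleftrightarrow> (\<forall>x y. f (x + y) = f x + f y) \<and> (\<forall>c x. f (c *\<^sub>C x) = c *\<^sub>C f x)"

definition bounded_clinear ::
  "('a::{complex_vector,real_normed_vector} \<Rightarrow> 'b::{complex_vector,real_normed_vector}) \<Rightarrow> bool" where
  "bounded_clinear f \<longleftrightarrow> clinear f \<and> (\<exists>K. \<forall>x. norm (f x) \<le> norm x * K)"

text \<open>Rank of an operator (complex dimension of its range; \<infinity> if infinite).\<close>
definition crank :: "('a \<Rightarrow> 'b::complex_vector) \<Rightarrow> enat" where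
  "crank F = (INF V\<in>{V. finite V \<and> range F \<subseteq> cspan V}. enat (card V))"

definition approx_num ::
  "nat \<Rightarrow> ('a::{complex_vector,real_normed_vector} \<Rightarrow> 'b::{complex_vector,real_normed_vector}) \<Rightarrow> real" where
  "approx_num n T = Inf {onorm (\<lambda>x. T x - F x) | F. bounded_clinear F \<and> crank F < enat n}"

definition cadjoint :: "('h::complex_inner \<Rightarrow> 'h) \<Rightarrow> ('h \<Rightarrow> 'h)" where
  "cadjoint T = (SOME S. \<forall>x y. cinner (T x) y = cinner x (S y))"

definition compact_op :: "('h::complex_inner \<Rightarrow> 'h) \<Rightarrow> bool" where
  "compact_op T \<longleftrightarrow> bounded_clinear T \<and> compact (closure (T ` cball 0 1))"

definition cstar_subalgebra :: "('h::chilbert_space \<Rightarrow> 'h) set \<Rightarrow> bool" where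
  "cstar_subalgebra \<A> \<longleftrightarrow>
     \<A> \<subseteq> Collect bounded_clinear \<and> (\<lambda>_. 0) \<in> \<A> \<and>
     (\<forall>S\<in>\<A>. \<forall>T\<in>\<A>. (\<lambda>x. S x + T x) \<in> \<A> \<and> (S \<circ> T) \<in> \<A>) \<and>
     (\<forall>c. \<forall>T\<in>\<A>. (\<lambda>x. c *\<^sub>C T x) \<in> \<A>) \<and>
     (\<forall>T\<in>\<A>. cadjoint T \<in> \<A>) \<and>
     (\<forall>T. bounded_clinear T \<and> (\<forall>e>0. \<exists>S\<in>\<A>. onorm (\<lambda>x. T x - S x) < e) \<longrightarrow> T \<in> \<A>)"

definition elem_op :: "nat \<Rightarrow> (nat \<Rightarrow> 'h \<Rightarrow> 'h::complex_vector) \<Rightarrow> (nat \<Rightarrow> 'h \<Rightarrow> 'h)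
    \<Rightarrow> ('h \<Rightarrow> 'h) \<Rightarrow> ('h \<Rightarrow> 'h)" where
  "elem_op m A B X = (\<lambda>x. \<Sum>i<m. A i (X (B i x)))"

definition clin_indep_ops :: "nat \<Rightarrow> (nat \<Rightarrow> 'h \<Rightarrow> 'h::complex_vector) \<Rightarrow> bool" where
  "clin_indep_ops m B \<longleftrightarrow>
     (\<forall>c. (\<forall>x. (\<Sum>i<m. c i *\<^sub>C B i x) = 0) \<longrightarrow> (\<forall>i<m. c i = 0))"

text \<open>Hilbert numbers of a bounded operator Phi on the Banach space \<A> (with the
  operator norm): sup of s_n(P o Phi o Q) over contractions Q : K' -> \<A> and
  P : \<A> -> H', where H' = K' is the Hilbert space type 'k.\<close>
definition hilbert_num :: "'k::chilbert_space itself \<Rightarrow> ('h::chilbert_space \<Rightarrow> 'h) set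
    \<Rightarrow> (('h \<Rightarrow> 'h) \<Rightarrow> ('h \<Rightarrow> 'h)) \<Rightarrow> nat \<Rightarrow> real" where
  "hilbert_num (_::'k itself) \<A> \<Phi> n = Sup {approx_num n (\<lambda>x::'k. P (\<Phi> (Q x))) | P Q.
     (\<forall>X\<in>\<A>. \<forall>Y\<in>\<A>. P (\<lambda>h. X h + Y h) = P X + P Y) \<and>
     (\<forall>c. \<forall>X\<in>\<A>. P (\<lambda>h. c *\<^sub>C X h) = c *\<^sub>C P X) \<and>
     (\<forall>X\<in>\<A>. norm (P X :: 'k) \<le> onorm X) \<and>
     (\<forall>x. Q x \<in> \<A>) \<and>
     (\<forall>x y. Q (x + y) = (\<lambda>h. Q x h + Q y h)) \<and>
     (\<forall>c x. Q (c *\<^sub>C x) = (\<lambda>h. c *\<^sub>C Q x h)) \<and>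
     (\<forall>x. onorm (Q x) \<le> norm x)}"

definition c0 :: "(nat \<Rightarrow> complex) set" where
  "c0 = {\<alpha>. \<alpha> \<longlonglongrightarrow> 0}"

text \<open>Non-increasing rearrangement of (|alpha_k|), indexed from 0.\<close>
definition decr_rearr :: "(nat \<Rightarrow> complex) \<Rightarrow> nat \<Rightarrow> real" where
  "decr_rearr \<alpha> n = Inf {t. 0 \<le> t \<and> finite {k. cmod (\<alpha> k) > t} \<and> card {k. cmod (\<alpha> k) > t} \<le> n}"

definition calkin_space :: "(nat \<Rightarrow> complex) set \<Rightarrow> bool" where
  "calkin_space I \<longleftrightarrow> I \<subseteq> c0 \<and> (\<lambda>_. 0) \<in> I \<and>
     (\<forall>\<alpha>\<in>I. \<forall>\<beta>\<in>I. (\<lambda>n. \<alpha> n + \<beta> n) \<in> I) \<and>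
     (\<forall>c. \<forall>\<alpha>\<in>I. (\<lambda>n. c * \<alpha> n) \<in> I) \<and>
     (\<forall>\<alpha>\<in>I. \<forall>\<beta>\<in>c0. (\<forall>n. decr_rearr \<beta> n \<le> decr_rearr \<alpha> n) \<longrightarrow> \<beta> \<in> I)"

text \<open>Sequences s(T) = (s_1(T), s_2(T), ...) and h(Phi), re-indexed from 0.\<close>
definition sing_seq :: "('h::chilbert_space \<Rightarrow> 'h) \<Rightarrow> nat \<Rightarrow> complex" where
  "sing_seq T n = complex_of_real (approx_num (Suc n) T)"

definition hilb_seq :: "'k::chilbert_space itself \<Rightarrow> ('h::chilbert_space \<Rightarrow> 'h) set
    \<Rightarrow> (('h \<Rightarrow> 'h) \<Rightarrow> ('h \<Rightarrow> 'h)) \<Rightarrow> nat \<Rightarrow> complex" where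
  "hilb_seq K \<A> \<Phi> n = complex_of_real (hilbert_num K \<A> \<Phi> (Suc n))"

end

theory Submission
  imports Defs
begin

text \<open>If B 0, ..., B (m-1) are linearly independent, finitely many vector pairs
  (a i k, b i k), k < r, satisfy sum_k <a i k, B j (b i k)> = c * delta i j. Compressing
  Phi on the right by the rank-one operators h \<mapsto> <a i k, h> y and evaluating at b i k
  on the left, the sum over k returns c * A i y. So A i factors as S \<circ> (sum_k P_k \<circ> Phi \<circ> Q_k) \<circ> U
  with contractions P_k, Q_k through the infinite-dimensional Hilbert space 'k, into which
  the separable space 'h embeds isometrically. Since s_(rn-r+1) of a sum of r operators is
  at most the sum of their s_n, this gives s_(rn-r+1)(A i) \<le> C h_n(Phi). For the B i the
  same argument runs with the transpose of B i with respect to an orthonormal basis, which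
  has the same approximation numbers. Finally s_(k+1)(A i) is dominated by the r-fold
  repetition of C h(Phi), and Calkin spaces are closed under such repetition.\<close>

lemma scaleC_zero_left[simp]: "0 *\<^sub>C x = 0"
proof -
  have "0 *\<^sub>R x = complex_of_real 0 *\<^sub>C x" by (rule scaleR_scaleC)
  thus ?thesis by simp
qed

lemma scaleC_minus1: "(-1) *\<^sub>C x = - x"
  by (metis scaleR_scaleC scaleR_minus1_left of_real_minus of_real_1)

lemma scaleC_zero_right[simp]: "a *\<^sub>C 0 = 0"
proof -
  have "a *\<^sub>C 0 = a *\<^sub>C (0 + 0)" by simp
  also have "\<dots> = a *\<^sub>C 0 + a *\<^sub>C 0" by (rule scaleC_add_right)
  finally show ?thesis by simp
qed

lemma scaleC_sum_right: "a *\<^sub>C (\<Sum>i\<in>I. f i) = (\<Sum>i\<in>I. a *\<^sub>C f i)"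
  by (induction I rule: infinite_finite_induct) (auto simp: scaleC_add_right)

lemma scaleC_sum_left: "(\<Sum>i\<in>I. f i) *\<^sub>C x = (\<Sum>i\<in>I. f i *\<^sub>C x)"
  by (induction I rule: infinite_finite_induct) (auto simp: scaleC_add_left)

lemma cinner_add_right: "cinner x (y + z) = cinner x y + cinner x z"
proof -
  have "cinner x (y + z) = cnj (cinner (y + z) x)" by (rule cinner_commute)
  also have "\<dots> = cnj (cinner y x) + cnj (cinner z x)" by (simp add: cinner_add_left)
  finally show ?thesis by (simp add: cinner_commute[of x y] cinner_commute[of x z])
qed

lemma cinner_scaleC_right: "cinner x (c *\<^sub>C y) = c * cinner x y"
proof -
  have "cinner x (c *\<^sub>C y) = cnj (cinner (c *\<^sub>C y) x)" by (rule cinner_commute)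
  also have "\<dots> = c * cnj (cinner y x)" by (simp add: cinner_scaleC_left)
  finally show ?thesis by (simp add: cinner_commute[of x y])
qed

lemma cinner_zero_left[simp]: "cinner 0 y = 0"
  using cinner_add_left[of 0 0 y] by simp

lemma cinner_zero_right[simp]: "cinner x 0 = 0"
  using cinner_add_right[of x 0 0] by simp

lemma cinner_minus_left: "cinner (- x) y = - cinner x y"
proof -
  have "cinner (- x) y = cinner ((-1) *\<^sub>C x) y" by (simp add: scaleC_minus1)
  thus ?thesis by (simp add: cinner_scaleC_left)
qed

lemma cinner_minus_right: "cinner x (- y) = - cinner x y"
proof -
  have "cinner x (- y) = cinner x ((-1) *\<^sub>C y)" by (simp add: scaleC_minus1)
  thus ?thesis by (simp add: cinner_scaleC_right)
qed

lemma cinner_diff_left: "cinner (x - y) z = cinner x z - cinner y z"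
  unfolding diff_conv_add_uminus cinner_add_left cinner_minus_left ..

lemma cinner_diff_right: "cinner x (y - z) = cinner x y - cinner x z"
  unfolding diff_conv_add_uminus cinner_add_right cinner_minus_right ..

lemma cinner_sum_left: "cinner (\<Sum>i\<in>I. f i) y = (\<Sum>i\<in>I. cinner (f i) y)"
  by (induction I rule: infinite_finite_induct) (auto simp: cinner_add_left)

lemma cinner_sum_right: "cinner x (\<Sum>i\<in>I. f i) = (\<Sum>i\<in>I. cinner x (f i))"
  by (induction I rule: infinite_finite_induct) (auto simp: cinner_add_right)

lemma cinner_self_real: "cinner x x = complex_of_real (Re (cinner x x))"
proof -
  have "Im (cinner x x) = Im (cnj (cinner x x))" using cinner_commute[of x x] by simp
  hence "Im (cinner x x) = 0" by simp
  thus ?thesis by (simp add: complex_eq_iff)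
qed

lemma cinner_self_norm: "cinner x x = complex_of_real ((norm x)\<^sup>2)"
  using cinner_self_real[of x] norm_eq_sqrt_cinner[of x] cinner_ge_zero[of x] by simp

lemma Re_cinner_self: "Re (cinner x x) = (norm x)\<^sup>2"
  by (simp add: cinner_self_norm)

lemma norm_scaleC: "norm (c *\<^sub>C (x::'a::complex_inner)) = cmod c * norm x"
proof -
  have 1: "cinner (c *\<^sub>C x) (c *\<^sub>C x) = (cnj c * c) * cinner x x"
    by (simp add: cinner_scaleC_left cinner_scaleC_right mult.assoc)
  have 2: "cnj c * c = complex_of_real ((cmod c)\<^sup>2)" by (simp only: complex_norm_square mult.commute)
  have "(norm (c *\<^sub>C x))\<^sup>2 = Re (cinner (c *\<^sub>C x) (c *\<^sub>C x))" by (simp add: Re_cinner_self)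
  also have "\<dots> = (cmod c)\<^sup>2 * (norm x)\<^sup>2" unfolding 1 2 cinner_self_norm[of x]
    by (simp only: of_real_mult[symmetric] Re_complex_of_real)
  finally have "(norm (c *\<^sub>C x))\<^sup>2 = (cmod c * norm x)\<^sup>2" by (simp add: power_mult_distrib)
  thus ?thesis by (simp add: power2_eq_iff_nonneg)
qed

lemma cinner_Cauchy_Schwarz: "cmod (cinner x y) \<le> norm x * norm y"
proof (cases "x = 0")
  case True thus ?thesis by simp
next
  case False
  define t where "t = cinner x y / cinner x x"
  have xx: "cinner x x = complex_of_real ((norm x)\<^sup>2)" by (rule cinner_self_norm)
  have nx: "norm x > 0" using False by simp
  have "0 \<le> Re (cinner (y - t *\<^sub>C x) (y - t *\<^sub>C x))" by (rule cinner_ge_zero)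
  also have "cinner (y - t *\<^sub>C x) (y - t *\<^sub>C x) =
      cinner y y - t * cinner y x - cnj t * cinner x y + cnj t * t * cinner x x"
    by (simp add: cinner_diff_left cinner_diff_right cinner_scaleC_left cinner_scaleC_right algebra_simps)
  also have "cnj t * t * cinner x x = cnj t * cinner x y"
  proof -
    have tx: "t * cinner x x = cinner x y" using False by (simp add: t_def cinner_eq_zero_iff)
    show ?thesis by (simp add: mult.assoc tx)
  qed
  also have "t * cinner y x = (cmod (cinner x y))\<^sup>2 / (norm x)\<^sup>2"
  proof -
    have "cinner y x = cnj (cinner x y)" by (rule cinner_commute)
    hence "t * cinner y x = cinner x y * cnj (cinner x y) / complex_of_real ((norm x)\<^sup>2)"
      by (simp add: t_def xx)
    thus ?thesis by (simp only: complex_norm_square[symmetric] of_real_divide of_real_power)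
  qed
  finally have "0 \<le> (norm y)\<^sup>2 - (cmod (cinner x y))\<^sup>2 / (norm x)\<^sup>2"
    by (simp add: Re_cinner_self)
  hence "(cmod (cinner x y))\<^sup>2 \<le> (norm x)\<^sup>2 * (norm y)\<^sup>2" using nx
    by (simp add: field_simps)
  hence "(cmod (cinner x y))\<^sup>2 \<le> (norm x * norm y)\<^sup>2" by (simp add: power_mult_distrib)
  thus ?thesis by (rule power2_le_imp_le) simp
qed

lemma bounded_bilinear_cinner: "bounded_bilinear cinner"
proof
  fix a a' b b' :: 'a and r :: real
  show "cinner (a + a') b = cinner a b + cinner a' b" by (rule cinner_add_left)
  show "cinner a (b + b') = cinner a b + cinner a b'" by (rule cinner_add_right)
  show "cinner (r *\<^sub>R a) b = r *\<^sub>R cinner a b"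
    by (simp add: scaleR_scaleC cinner_scaleC_left scaleR_conv_of_real)
  show "cinner a (r *\<^sub>R b) = r *\<^sub>R cinner a b"
    by (simp add: scaleR_scaleC cinner_scaleC_right scaleR_conv_of_real)
  show "\<exists>K. \<forall>a b. norm (cinner a b) \<le> norm a * norm b * K"
    by (rule exI[of _ 1]) (simp add: cinner_Cauchy_Schwarz)
qed

lemma clinear_add: "clinear f \<Longrightarrow> f (x + y) = f x + f y" by (simp add: clinear_def)

lemma clinear_scaleC: "clinear f \<Longrightarrow> f (c *\<^sub>C x) = c *\<^sub>C f x" by (simp add: clinear_def)

lemma clinear_zero: "clinear f \<Longrightarrow> f 0 = 0"
  using clinear_scaleC[of f 0 0] by simp

lemma clinear_minus: "clinear f \<Longrightarrow> f (- x) = - f x"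
  using clinear_scaleC[of f "-1" x] by (simp add: scaleC_minus1)

lemma clinear_diff: "clinear f \<Longrightarrow> f (x - y) = f x - f y"
  by (simp only: diff_conv_add_uminus clinear_add clinear_minus)

lemma clinear_sum: "clinear f \<Longrightarrow> f (\<Sum>i\<in>I. g i) = (\<Sum>i\<in>I. f (g i))"
  by (induction I rule: infinite_finite_induct) (auto simp: clinear_add clinear_zero)

lemma bounded_clinear_clinear: "bounded_clinear f \<Longrightarrow> clinear f" by (simp add: bounded_clinear_def)

lemma bounded_clinear_bounded_linear: "bounded_clinear f \<Longrightarrow> bounded_linear f"
proof -
  assume a: "bounded_clinear f"
  then obtain K where K: "\<And>x. norm (f x) \<le> norm x * K" unfolding bounded_clinear_def by blast
  have l: "clinear f" using a by (simp add: bounded_clinear_def)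
  show ?thesis
    by (rule bounded_linear_intro[of f K]) (simp_all add: K clinear_add[OF l] clinear_scaleC[OF l] scaleR_scaleC)
qed

lemma bounded_clinearI: "clinear f \<Longrightarrow> (\<And>x. norm (f x) \<le> norm x * K) \<Longrightarrow> bounded_clinear f"
  unfolding bounded_clinear_def by blast

lemma norm_le_onorm: "bounded_clinear f \<Longrightarrow> norm (f x) \<le> onorm f * norm x"
  by (rule onorm[OF bounded_clinear_bounded_linear])

lemma onorm_nonneg: "bounded_clinear f \<Longrightarrow> 0 \<le> onorm f"
  by (rule onorm_pos_le[OF bounded_clinear_bounded_linear])

lemma clinearI: "(\<And>x y. f (x + y) = f x + f y) \<Longrightarrow> (\<And>c x. f (c *\<^sub>C x) = c *\<^sub>C f x) \<Longrightarrow> clinear f"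
  by (simp add: clinear_def)

lemma bounded_clinear_zero: "bounded_clinear (\<lambda>x. 0)"
  by (rule bounded_clinearI[where K=0]) (auto intro: clinearI)

lemma bounded_clinear_ident: "bounded_clinear (\<lambda>x. x)"
  by (rule bounded_clinearI[where K=1]) (auto intro: clinearI)

lemma bounded_clinear_add: "bounded_clinear f \<Longrightarrow> bounded_clinear g \<Longrightarrow> bounded_clinear (\<lambda>x. f x + g x)"
proof -
  assume f: "bounded_clinear f" and g: "bounded_clinear g"
  show ?thesis
  proof (rule bounded_clinearI[where K="onorm f + onorm g"])
    show "clinear (\<lambda>x. f x + g x)"
      using bounded_clinear_clinear[OF f] bounded_clinear_clinear[OF g]
      by (intro clinearI) (simp_all add: clinear_add clinear_scaleC scaleC_add_right algebra_simps)
    fix x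
    have "norm (f x + g x) \<le> norm (f x) + norm (g x)" by (rule norm_triangle_ineq)
    also have "\<dots> \<le> onorm f * norm x + onorm g * norm x"
      using norm_le_onorm[OF f] norm_le_onorm[OF g] by (intro add_mono)
    finally show "norm (f x + g x) \<le> norm x * (onorm f + onorm g)" by (simp add: algebra_simps)
  qed
qed

lemma bounded_clinear_scaleC: "bounded_clinear (f::'a::complex_inner \<Rightarrow> 'b::complex_inner) \<Longrightarrow> bounded_clinear (\<lambda>x. c *\<^sub>C f x)"
proof -
  assume f: "bounded_clinear f"
  show ?thesis
  proof (rule bounded_clinearI[where K="cmod c * onorm f"])
    show "clinear (\<lambda>x. c *\<^sub>C f x)"
      using bounded_clinear_clinear[OF f]
      by (intro clinearI) (simp_all add: clinear_add clinear_scaleC scaleC_add_right scaleC_scaleC mult.commute)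
    fix x
    have "cmod c * norm (f x) \<le> cmod c * (onorm f * norm x)"
      by (rule mult_left_mono[OF norm_le_onorm[OF f]]) simp
    thus "norm (c *\<^sub>C f x) \<le> norm x * (cmod c * onorm f)"
      by (simp add: norm_scaleC algebra_simps)
  qed
qed

lemma bounded_clinear_minus: "bounded_clinear (f::'a::complex_inner \<Rightarrow> 'b::complex_inner) \<Longrightarrow> bounded_clinear (\<lambda>x. - f x)"
  using bounded_clinear_scaleC[of f "-1"] by (simp add: scaleC_minus1)

lemma bounded_clinear_diff: "bounded_clinear (f::'a::complex_inner \<Rightarrow> 'b::complex_inner) \<Longrightarrow> bounded_clinear g \<Longrightarrow> bounded_clinear (\<lambda>x. f x - g x)"
  using bounded_clinear_add[of f "\<lambda>x. - g x"] bounded_clinear_minus[of g] by simp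

lemma bounded_clinear_compose: "bounded_clinear f \<Longrightarrow> bounded_clinear g \<Longrightarrow> bounded_clinear (\<lambda>x. f (g x))"
proof -
  assume f: "bounded_clinear f" and g: "bounded_clinear g"
  show ?thesis
  proof (rule bounded_clinearI[where K="onorm f * onorm g"])
    show "clinear (\<lambda>x. f (g x))"
      using bounded_clinear_clinear[OF f] bounded_clinear_clinear[OF g]
      by (intro clinearI) (simp_all add: clinear_add clinear_scaleC)
    fix x
    have "norm (f (g x)) \<le> onorm f * norm (g x)" by (rule norm_le_onorm[OF f])
    also have "\<dots> \<le> onorm f * (onorm g * norm x)"
      by (intro mult_left_mono norm_le_onorm[OF g] onorm_nonneg[OF f])
    finally show "norm (f (g x)) \<le> norm x * (onorm f * onorm g)" by (simp add: algebra_simps)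
  qed
qed

lemma bounded_clinear_sum: "finite K \<Longrightarrow> (\<And>k. k \<in> K \<Longrightarrow> bounded_clinear (F k)) \<Longrightarrow>
    bounded_clinear (\<lambda>x. \<Sum>k\<in>K. F k x)"
proof (induction K rule: finite_induct)
  case empty thus ?case by (simp add: bounded_clinear_zero)
next
  case (insert a K) thus ?case by (simp add: bounded_clinear_add)
qed

lemma onorm_compose_le: "bounded_clinear f \<Longrightarrow> bounded_clinear g \<Longrightarrow>
    onorm (\<lambda>x. f (g x)) \<le> onorm f * onorm g"
  using onorm_compose[OF bounded_clinear_bounded_linear bounded_clinear_bounded_linear, of f g] by (simp add: o_def)

lemma onorm_compose3_le: "bounded_clinear f \<Longrightarrow> bounded_clinear g \<Longrightarrow> bounded_clinear h \<Longrightarrow>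
    onorm (\<lambda>x. f (g (h x))) \<le> onorm f * onorm g * onorm h"
proof -
  assume f: "bounded_clinear f" and g: "bounded_clinear g" and h: "bounded_clinear h"
  have "onorm (\<lambda>x. f (g (h x))) \<le> onorm f * onorm (\<lambda>x. g (h x))"
    by (rule onorm_compose_le[OF f bounded_clinear_compose[OF g h]])
  also have "\<dots> \<le> onorm f * (onorm g * onorm h)"
    by (intro mult_left_mono onorm_compose_le[OF g h] onorm_nonneg[OF f])
  finally show ?thesis by (simp add: mult.assoc)
qed

lemma cspan_zero: "0 \<in> cspan V"
  unfolding cspan_def by (rule CollectI, rule exI[of _ "{}"]) auto

lemma cspan_superset: "v \<in> V \<Longrightarrow> v \<in> cspan V"
  unfolding cspan_def by (rule CollectI, rule exI[of _ "{v}"], rule exI[of _ "\<lambda>_. 1"]) (simp add: scaleC_one)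

lemma cspan_add: assumes "x \<in> cspan V" "y \<in> cspan V" shows "x + y \<in> cspan V"
proof -
  obtain W1 c1 where 1: "finite W1" "W1 \<subseteq> V" "x = (\<Sum>v\<in>W1. c1 v *\<^sub>C v)" using assms(1) unfolding cspan_def by blast
  obtain W2 c2 where 2: "finite W2" "W2 \<subseteq> V" "y = (\<Sum>v\<in>W2. c2 v *\<^sub>C v)" using assms(2) unfolding cspan_def by blast
  define c where "c v = (if v \<in> W1 then c1 v else 0) + (if v \<in> W2 then c2 v else 0)" for v
  have "(\<Sum>v\<in>W1 \<union> W2. (if v \<in> W1 then c1 v else 0) *\<^sub>C v) = (\<Sum>v\<in>W1. (if v \<in> W1 then c1 v else 0) *\<^sub>C v)"
    using 1 2 by (intro sum.mono_neutral_right) auto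
  hence "x = (\<Sum>v\<in>W1 \<union> W2. (if v \<in> W1 then c1 v else 0) *\<^sub>C v)" using 1 by simp
  moreover
  have "(\<Sum>v\<in>W1 \<union> W2. (if v \<in> W2 then c2 v else 0) *\<^sub>C v) = (\<Sum>v\<in>W2. (if v \<in> W2 then c2 v else 0) *\<^sub>C v)"
    using 1 2 by (intro sum.mono_neutral_right) auto
  hence "y = (\<Sum>v\<in>W1 \<union> W2. (if v \<in> W2 then c2 v else 0) *\<^sub>C v)" using 2 by simp
  ultimately have e: "x + y = (\<Sum>v\<in>W1 \<union> W2. c v *\<^sub>C v)"
    by (simp add: c_def scaleC_add_left sum.distrib)
  have "finite (W1 \<union> W2)" "W1 \<union> W2 \<subseteq> V" using 1 2 by auto
  thus ?thesis unfolding cspan_def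
    by (intro CollectI exI[of _ "W1 \<union> W2"] exI[of _ c]) (simp only: e simp_thms)
qed

lemma cspan_scale: assumes "x \<in> cspan V" shows "a *\<^sub>C x \<in> cspan V"
proof -
  obtain W c where 1: "finite W" "W \<subseteq> V" "x = (\<Sum>v\<in>W. c v *\<^sub>C v)" using assms unfolding cspan_def by blast
  have e: "a *\<^sub>C x = (\<Sum>v\<in>W. (a * c v) *\<^sub>C v)" unfolding 1(3) scaleC_sum_right scaleC_scaleC ..
  show ?thesis unfolding cspan_def
    by (rule CollectI, rule exI[of _ W], rule exI[of _ "\<lambda>v. a * c v"]) (simp only: e 1(1,2) simp_thms)
qed

lemma cspan_sum: "(\<And>i. i \<in> I \<Longrightarrow> g i \<in> cspan V) \<Longrightarrow> (\<Sum>i\<in>I. g i) \<in> cspan V"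
  by (induction I rule: infinite_finite_induct) (auto simp: cspan_zero cspan_add)

lemma cspan_minimal: assumes "V \<subseteq> cspan U" shows "cspan V \<subseteq> cspan U"
proof
  fix x assume "x \<in> cspan V"
  then obtain W c where 1: "finite W" "W \<subseteq> V" "x = (\<Sum>v\<in>W. c v *\<^sub>C v)" unfolding cspan_def by blast
  show "x \<in> cspan U" unfolding 1(3) using 1 assms by (intro cspan_sum cspan_scale) auto
qed

lemma cspan_mono: "V \<subseteq> U \<Longrightarrow> cspan V \<subseteq> cspan U"
  by (rule cspan_minimal) (auto intro: cspan_superset)

lemma cspan_image: assumes "clinear S" "x \<in> cspan V" shows "S x \<in> cspan (S ` V)"
proof -
  obtain W c where 1: "finite W" "W \<subseteq> V" "x = (\<Sum>v\<in>W. c v *\<^sub>C v)" using assms(2) unfolding cspan_def by blast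
  have "S x = (\<Sum>v\<in>W. c v *\<^sub>C S v)" using assms(1) by (simp add: 1 clinear_sum clinear_scaleC)
  also have "\<dots> \<in> cspan (S ` V)" using 1 by (intro cspan_sum cspan_scale cspan_superset) auto
  finally show ?thesis .
qed

lemma crank_lt_iff: "crank F < enat n \<longleftrightarrow> (\<exists>V. finite V \<and> range F \<subseteq> cspan V \<and> card V < n)"
  unfolding crank_def by (simp add: INF_less_iff)

lemma crank_zero: "crank (\<lambda>x. 0) < enat (Suc n)"
  unfolding crank_lt_iff by (rule exI[of _ "{}"]) (auto simp: cspan_zero)

lemma crank_compose: assumes "clinear S" "crank F < enat n" shows "crank (\<lambda>x. S (F (U x))) < enat n"
proof -
  obtain V where V: "finite V" "range F \<subseteq> cspan V" "card V < n" using assms(2) unfolding crank_lt_iff by blast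
  have "range (\<lambda>x. S (F (U x))) \<subseteq> cspan (S ` V)" using V(2) cspan_image[OF assms(1)] by blast
  moreover have "card (S ` V) < n" using V card_image_le[of V S] by linarith
  ultimately show ?thesis unfolding crank_lt_iff using V(1) by blast
qed

lemma crank_sum:
  assumes "finite K" "\<And>k. k \<in> K \<Longrightarrow> crank (F k) < enat (Suc n)"
  shows "crank (\<lambda>x. \<Sum>k\<in>K. F k x) < enat (Suc (card K * n))"
  using assms
proof (induction K rule: finite_induct)
  case empty thus ?case by (simp add: crank_zero)
next
  case (insert a K)
  obtain V1 where V1: "finite V1" "range (\<lambda>x. \<Sum>k\<in>K. F k x) \<subseteq> cspan V1" "card V1 < Suc (card K * n)"
    using insert unfolding crank_lt_iff by auto
  obtain V2 where V2: "finite V2" "range (F a) \<subseteq> cspan V2" "card V2 < Suc n"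
    using insert(4)[of a] unfolding crank_lt_iff by auto
  have "range (\<lambda>x. \<Sum>k\<in>insert a K. F k x) \<subseteq> cspan (V1 \<union> V2)"
  proof
    fix y assume "y \<in> range (\<lambda>x. \<Sum>k\<in>insert a K. F k x)"
    then obtain x where y: "y = F a x + (\<Sum>k\<in>K. F k x)" using insert by auto
    have "F a x \<in> cspan (V1 \<union> V2)" using V2(2) cspan_mono[of V2 "V1 \<union> V2"] by blast
    moreover have "(\<Sum>k\<in>K. F k x) \<in> cspan (V1 \<union> V2)" using V1(2) cspan_mono[of V1 "V1 \<union> V2"] by blast
    ultimately show "y \<in> cspan (V1 \<union> V2)" unfolding y by (rule cspan_add)
  qed
  moreover have "card (V1 \<union> V2) < Suc (card (insert a K) * n)"
    using card_Un_le[of V1 V2] V1(3) V2(3) insert(1,2) by simp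
  ultimately show ?case unfolding crank_lt_iff using V1(1) V2(1) by blast
qed

section \<open>Approximation numbers\<close>

lemma field_le_epsilon_scaled:
  fixes a s K :: real
  assumes "\<And>e. e > 0 \<Longrightarrow> a \<le> s + K * e"
  shows "a \<le> s"
proof (rule field_le_epsilon)
  fix e :: real assume e: "e > 0"
  define d where "d = e / (\<bar>K\<bar> + 1)"
  have d: "d > 0" using e by (simp add: d_def)
  have "K * d \<le> \<bar>K\<bar> * d" using d by (simp add: mult_right_mono)
  also have "\<dots> \<le> e" using e by (simp add: d_def field_simps)
  finally have "K * d \<le> e" .
  thus "a \<le> s + e" using assms[OF d] by linarith
qed

definition approx_errors ::
    "nat \<Rightarrow> ('a::{complex_vector,real_normed_vector} \<Rightarrow> 'b::{complex_vector,real_normed_vector}) \<Rightarrow> real set" where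
  "approx_errors n T = {onorm (\<lambda>x. T x - F x) | F. bounded_clinear F \<and> crank F < enat n}"

lemma approx_num_eq_Inf: "approx_num n T = Inf (approx_errors n T)"
  by (simp add: approx_num_def approx_errors_def)

lemma onorm_in_approx_errors: "n \<ge> 1 \<Longrightarrow> onorm T \<in> approx_errors n (T::'a::complex_inner \<Rightarrow> 'b::complex_inner)"
proof -
  assume n: "n \<ge> 1"
  then obtain m where m: "n = Suc m" by (cases n) auto
  show ?thesis unfolding approx_errors_def using bounded_clinear_zero crank_zero[of m] m by force
qed

lemma bdd_below_approx_errors: "bounded_clinear (T::'a::complex_inner \<Rightarrow> 'b::complex_inner) \<Longrightarrow> bdd_below (approx_errors n T)"
  unfolding approx_errors_def bdd_below_def
  by (rule exI[of _ 0]) (auto intro!: onorm_nonneg bounded_clinear_diff)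

lemma approx_num_nonneg: "bounded_clinear (T::'a::complex_inner \<Rightarrow> 'b::complex_inner) \<Longrightarrow> n \<ge> 1 \<Longrightarrow> 0 \<le> approx_num n T"
  unfolding approx_num_eq_Inf
proof (rule cInf_greatest)
  assume "bounded_clinear T" "n \<ge> 1"
  thus "approx_errors n T \<noteq> {}" using onorm_in_approx_errors[of n T] by blast
  fix x assume "x \<in> approx_errors n T"
  thus "0 \<le> x" using \<open>bounded_clinear T\<close> unfolding approx_errors_def by (auto intro!: onorm_nonneg bounded_clinear_diff)
qed

lemma approx_num_le_onorm_diff: "bounded_clinear (T::'a::complex_inner \<Rightarrow> 'b::complex_inner) \<Longrightarrow> bounded_clinear F \<Longrightarrow>
    crank F < enat n \<Longrightarrow> approx_num n T \<le> onorm (\<lambda>x. T x - F x)"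
  unfolding approx_num_eq_Inf by (rule cInf_lower) (auto simp: approx_errors_def bdd_below_approx_errors[unfolded approx_errors_def])

lemma approx_num_le_onorm: "bounded_clinear (T::'a::complex_inner \<Rightarrow> 'b::complex_inner) \<Longrightarrow> n \<ge> 1 \<Longrightarrow>
   approx_num n T \<le> onorm T"
  unfolding approx_num_eq_Inf by (rule cInf_lower[OF onorm_in_approx_errors bdd_below_approx_errors])

lemma approx_num_less_witness:
  assumes "bounded_clinear (T::'a::complex_inner \<Rightarrow> 'b::complex_inner)" "n \<ge> 1" "approx_num n T < b"
  shows "\<exists>F. bounded_clinear F \<and> crank F < enat n \<and> onorm (\<lambda>x. T x - F x) < b"
proof -
  have "\<exists>y\<in>approx_errors n T. y < b" using assms(3) unfolding approx_num_eq_Inf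
    by (intro cInf_lessD) (use onorm_in_approx_errors[OF assms(2)] in blast)+
  thus ?thesis unfolding approx_errors_def by blast
qed

lemma approx_num_antimono:
  assumes "bounded_clinear (T::'a::complex_inner \<Rightarrow> 'b::complex_inner)" "1 \<le> n" "n \<le> n'"
  shows "approx_num n' T \<le> approx_num n T"
  unfolding approx_num_eq_Inf
proof (rule cInf_superset_mono)
  show "approx_errors n T \<noteq> {}" using onorm_in_approx_errors[OF assms(2)] by blast
  show "bdd_below (approx_errors n' T)" by (rule bdd_below_approx_errors[OF assms(1)])
  show "approx_errors n T \<subseteq> approx_errors n' T"
  proof
    fix y assume "y \<in> approx_errors n T"
    then obtain F where F: "y = onorm (\<lambda>x. T x - F x)" "bounded_clinear F" "crank F < enat n"
      unfolding approx_errors_def by blast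
    have "enat n \<le> enat n'" using assms(3) by simp
    hence "crank F < enat n'" using F(3) by (rule less_le_trans[rotated])
    thus "y \<in> approx_errors n' T" unfolding approx_errors_def using F by blast
  qed
qed

lemma approx_num_compose_le:
  fixes S :: "'b::complex_inner \<Rightarrow> 'c::complex_inner" and T :: "'a::complex_inner \<Rightarrow> 'b"
    and U :: "'d::complex_inner \<Rightarrow> 'a"
  assumes S: "bounded_clinear S" and T: "bounded_clinear T" and U: "bounded_clinear U" and N: "N \<ge> 1"
  shows "approx_num N (\<lambda>x. S (T (U x))) \<le> onorm S * approx_num N T * onorm U"
proof -
  define K where "K = onorm S * onorm U"
  have K: "K \<ge> 0" unfolding K_def using onorm_nonneg[OF S] onorm_nonneg[OF U] by simp
  have "approx_num N (\<lambda>x. S (T (U x))) \<le> K * approx_num N T + K * e" if e: "e > 0" for e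
  proof -
    have "approx_num N T < approx_num N T + e" using e by linarith
    from approx_num_less_witness[OF T N this]
    obtain F where F: "bounded_clinear F" "crank F < enat N" "onorm (\<lambda>x. T x - F x) < approx_num N T + e"
      by blast
    have G: "bounded_clinear (\<lambda>x. S (F (U x)))" by (rule bounded_clinear_compose[OF S bounded_clinear_compose[OF F(1) U]])
    have "approx_num N (\<lambda>x. S (T (U x))) \<le> onorm (\<lambda>x. S (T (U x)) - S (F (U x)))"
      by (rule approx_num_le_onorm_diff[OF _ G crank_compose[OF bounded_clinear_clinear[OF S] F(2)]]) (rule bounded_clinear_compose[OF S bounded_clinear_compose[OF T U]])
    also have "(\<lambda>x. S (T (U x)) - S (F (U x))) = (\<lambda>x. S ((\<lambda>y. T y - F y) (U x)))"
      by (simp add: clinear_diff[OF bounded_clinear_clinear[OF S]])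
    also have "onorm \<dots> \<le> onorm S * onorm (\<lambda>y. T y - F y) * onorm U"
      by (rule onorm_compose3_le[OF S bounded_clinear_diff[OF T F(1)] U])
    also have "\<dots> \<le> onorm S * (approx_num N T + e) * onorm U"
      by (intro mult_right_mono mult_left_mono onorm_nonneg S U less_imp_le[OF F(3)])
    also have "\<dots> = K * approx_num N T + K * e" by (simp add: K_def algebra_simps)
    finally show ?thesis .
  qed
  hence "approx_num N (\<lambda>x. S (T (U x))) \<le> K * approx_num N T" by (rule field_le_epsilon_scaled[where K=K]) simp
  thus ?thesis by (simp add: K_def algebra_simps)
qed

lemma approx_num_sum_le:
  fixes T :: "nat \<Rightarrow> 'a::complex_inner \<Rightarrow> 'b::complex_inner"
  assumes T: "\<And>k. k < r \<Longrightarrow> bounded_clinear (T k)" and n: "n \<ge> 1"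
  shows "approx_num (r * n - r + 1) (\<lambda>x. \<Sum>k<r. T k x) \<le> (\<Sum>k<r. approx_num n (T k))"
proof -
  have "approx_num (r * n - r + 1) (\<lambda>x. \<Sum>k<r. T k x) \<le> (\<Sum>k<r. approx_num n (T k)) + real r * e"
    if e: "e > 0" for e
  proof -
    have "\<forall>k. \<exists>F. k < r \<longrightarrow> bounded_clinear F \<and> crank F < enat n \<and> onorm (\<lambda>x. T k x - F x) < approx_num n (T k) + e"
    proof (intro allI)
      fix k
      have "approx_num n (T k) < approx_num n (T k) + e" using e by linarith
      thus "\<exists>F. k < r \<longrightarrow> bounded_clinear F \<and> crank F < enat n \<and> onorm (\<lambda>x. T k x - F x) < approx_num n (T k) + e"
        using approx_num_less_witness[OF T n] by blast
    qed
    then obtain F where F: "\<And>k. k < r \<Longrightarrow> bounded_clinear (F k) \<and> crank (F k) < enat n \<and>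
        onorm (\<lambda>x. T k x - F k x) < approx_num n (T k) + e" by metis
    obtain m where m: "n = Suc m" using n by (cases n) auto
    have G: "bounded_clinear (\<lambda>x. \<Sum>k<r. F k x)" using F by (intro bounded_clinear_sum) auto
    have cr: "crank (\<lambda>x. \<Sum>k\<in>{..<r}. F k x) < enat (Suc (card {..<r} * m))"
      using F m by (intro crank_sum) auto
    have "Suc (card {..<r} * m) = r * n - r + 1" using m by (simp add: algebra_simps)
    hence cr': "crank (\<lambda>x. \<Sum>k<r. F k x) < enat (r * n - r + 1)" using cr by simp
    have "approx_num (r * n - r + 1) (\<lambda>x. \<Sum>k<r. T k x) \<le> onorm (\<lambda>x. (\<Sum>k<r. T k x) - (\<Sum>k<r. F k x))"
      by (rule approx_num_le_onorm_diff[OF _ G cr']) (intro bounded_clinear_sum T, auto)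
    also have "(\<lambda>x. (\<Sum>k<r. T k x) - (\<Sum>k<r. F k x)) = (\<lambda>x. \<Sum>k<r. T k x - F k x)"
      by (simp add: sum_subtractf)
    also have "onorm \<dots> \<le> (\<Sum>k<r. onorm (\<lambda>x. T k x - F k x))"
      by (rule onorm_sum) (auto intro!: bounded_clinear_bounded_linear bounded_clinear_diff T F[THEN conjunct1])
    also have "\<dots> \<le> (\<Sum>k<r. approx_num n (T k) + e)"
      by (intro sum_mono less_imp_le) (use F in auto)
    also have "\<dots> = (\<Sum>k<r. approx_num n (T k)) + real r * e" by (simp add: sum.distrib)
    finally show ?thesis .
  qed
  thus ?thesis by (rule field_le_epsilon_scaled[where K="real r"]) simp
qed

section \<open>Orthonormal sequences and expansions\<close>

subclass (in chilbert_space) banach ..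

text \<open>Zero vectors are allowed: Gram--Schmidt applied to a dense sequence produces them.\<close>

definition orthonormal_seq :: "(nat \<Rightarrow> 'a::complex_inner) \<Rightarrow> bool" where
  "orthonormal_seq E \<longleftrightarrow> (\<forall>n m. n \<noteq> m \<longrightarrow> cinner (E n) (E m) = 0) \<and> (\<forall>n. E n \<noteq> 0 \<longrightarrow> norm (E n) = 1)"

lemma orthonormal_seq_cinner: "orthonormal_seq E \<Longrightarrow> cinner (E k) (E n) = (if k = n \<and> E n \<noteq> 0 then 1 else 0)"
proof -
  assume o: "orthonormal_seq E"
  show ?thesis
  proof (cases "k = n")
    case True
    show ?thesis
    proof (cases "E n = 0")
      case False
      hence "norm (E n) = 1" using o unfolding orthonormal_seq_def by blast
      thus ?thesis using True False by (simp add: cinner_self_norm)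
    qed (use True in simp)
  next
    case False thus ?thesis using o unfolding orthonormal_seq_def by simp
  qed
qed

definition nz_ind :: "'a::zero \<Rightarrow> real" where "nz_ind x = (if x = 0 then 0 else 1)"

lemma nz_ind_le_1: "nz_ind x \<le> 1" by (simp add: nz_ind_def)

lemma orthonormal_seq_cinner_sum:
  assumes "orthonormal_seq E" "finite A"
  shows "cinner (E k) (\<Sum>n\<in>A. c n *\<^sub>C E n) = (if k \<in> A \<and> E k \<noteq> 0 then c k else 0)"
proof -
  have "cinner (E k) (\<Sum>n\<in>A. c n *\<^sub>C E n) = (\<Sum>n\<in>A. c n * cinner (E k) (E n))"
    by (simp add: cinner_sum_right cinner_scaleC_right)
  also have "\<dots> = (\<Sum>n\<in>A. (if n = k then (if E k \<noteq> 0 then c k else 0) else 0))"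
    by (intro sum.cong refl) (auto simp: orthonormal_seq_cinner[OF assms(1)])
  also have "\<dots> = (if k \<in> A \<and> E k \<noteq> 0 then c k else 0)"
    using assms(2) by (simp add: sum.delta')
  finally show ?thesis .
qed

lemma orthonormal_seq_norm_sum:
  assumes "orthonormal_seq E" "finite A"
  shows "(norm (\<Sum>n\<in>A. c n *\<^sub>C E n))\<^sup>2 = (\<Sum>n\<in>A. (cmod (c n))\<^sup>2 * nz_ind (E n))"
proof -
  define s where "s = (\<Sum>n\<in>A. c n *\<^sub>C E n)"
  have "cinner s s = (\<Sum>k\<in>A. cnj (c k) * cinner (E k) s)"
    by (simp add: s_def[of] cinner_sum_left cinner_scaleC_left)
  also have "\<dots> = (\<Sum>k\<in>A. cnj (c k) * (if E k \<noteq> 0 then c k else 0))"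
    by (intro sum.cong refl) (simp add: s_def orthonormal_seq_cinner_sum[OF assms])
  also have "\<dots> = (\<Sum>k\<in>A. complex_of_real ((cmod (c k))\<^sup>2 * nz_ind (E k)))"
    by (intro sum.cong refl) (simp add: nz_ind_def complex_norm_square mult.commute del: of_real_power)
  finally have "cinner s s = complex_of_real (\<Sum>k\<in>A. (cmod (c k))\<^sup>2 * nz_ind (E k))" by simp
  thus ?thesis unfolding s_def[symmetric] by (simp only: cinner_self_norm of_real_eq_iff)
qed

lemma le_of_square_le_mult:
  fixes S a :: real
  assumes "0 \<le> S" "S * S \<le> a * S" "0 \<le> a" shows "S \<le> a"
proof (cases "S = 0")
  case True
  thus ?thesis using assms(3) by simp
next
  case False
  hence "S > 0" using assms(1) by simp
  thus ?thesis using assms(2) by (simp add: mult_le_cancel_right)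
qed

lemma sum_square_op_coeffs_le:
  fixes X :: "'a::complex_inner \<Rightarrow> 'b::complex_inner"
  assumes X: "bounded_clinear X" and o: "orthonormal_seq E"
  shows "(\<Sum>n<N. (cmod (cinner z (X (E n))))\<^sup>2) \<le> (onorm X * norm z)\<^sup>2"
proof -
  define c where "c n = cinner z (X (E n))" for n
  define S where "S = (\<Sum>n<N. (cmod (c n))\<^sup>2)"
  define p where "p = (\<Sum>n<N. cnj (c n) *\<^sub>C E n)"
  have S0: "0 \<le> S" unfolding S_def by (simp add: sum_nonneg)
  have "cinner z (X p) = (\<Sum>n<N. cnj (c n) * c n)"
    unfolding p_def using bounded_clinear_clinear[OF X]
    by (simp add: clinear_sum clinear_scaleC cinner_sum_right cinner_scaleC_right c_def)
  also have "\<dots> = complex_of_real S" unfolding S_def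
    by (simp add: complex_norm_square mult.commute del: of_real_power)
  finally have zp: "cinner z (X p) = complex_of_real S" .
  have "(norm p)\<^sup>2 = (\<Sum>n<N. (cmod (cnj (c n)))\<^sup>2 * nz_ind (E n))"
    unfolding p_def by (rule orthonormal_seq_norm_sum[OF o]) simp
  also have "\<dots> \<le> S" unfolding S_def
    by (intro sum_mono) (simp add: nz_ind_le_1 mult_left_le)
  finally have pS: "(norm p)\<^sup>2 \<le> S" .
  have "S = cmod (cinner z (X p))" using zp S0 by simp
  also have "\<dots> \<le> norm z * norm (X p)" by (rule cinner_Cauchy_Schwarz)
  also have "\<dots> \<le> norm z * (onorm X * norm p)"
    by (intro mult_left_mono norm_le_onorm[OF X]) simp
  finally have Sle: "S \<le> (norm z * onorm X) * norm p" by (simp add: mult.assoc)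
  have a0: "0 \<le> norm z * onorm X" using onorm_nonneg[OF X] by simp
  have "S * S \<le> ((norm z * onorm X) * norm p)\<^sup>2"
    using Sle S0 by (simp add: power2_eq_square mult_mono)
  also have "\<dots> = (norm z * onorm X)\<^sup>2 * (norm p)\<^sup>2" by (simp add: power_mult_distrib)
  also have "\<dots> \<le> (norm z * onorm X)\<^sup>2 * S" by (rule mult_left_mono[OF pS zero_le_power2])
  finally have "S \<le> (norm z * onorm X)\<^sup>2" by (rule le_of_square_le_mult[OF S0]) simp
  thus ?thesis unfolding S_def c_def by (simp add: mult.commute)
qed

lemma Bessel_inequality:
  assumes o: "orthonormal_seq (E::nat \<Rightarrow> 'a::complex_inner)"
  shows "(\<Sum>n<N. (cmod (cinner (E n) x))\<^sup>2) \<le> (norm x)\<^sup>2"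
proof -
  have "(\<Sum>n<N. (cmod (cinner (E n) x))\<^sup>2) = (\<Sum>n<N. (cmod (cinner x ((\<lambda>y. y) (E n))))\<^sup>2)"
    by (intro sum.cong refl) (metis cinner_commute complex_mod_cnj)
  also have "\<dots> \<le> (onorm (\<lambda>y::'a. y) * norm x)\<^sup>2" by (rule sum_square_op_coeffs_le[OF bounded_clinear_ident o])
  also have "\<dots> \<le> (norm x)\<^sup>2"
  proof -
    have o1: "onorm (\<lambda>y::'a. y) \<le> 1" by (rule onorm_id_le)
    have o0: "0 \<le> onorm (\<lambda>y::'a. y)" by (rule onorm_pos_le[OF bounded_linear_ident])
    show ?thesis by (rule power_mono) (simp_all add: mult_left_le_one_le o0 o1)
  qed
  finally show ?thesis .
qed

lemma summable_square_bounded: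
  fixes c :: "nat \<Rightarrow> complex"
  assumes "\<And>N. (\<Sum>n<N. (cmod (c n))\<^sup>2) \<le> B"
  shows "summable (\<lambda>n. (cmod (c n))\<^sup>2)" "(\<Sum>n. (cmod (c n))\<^sup>2) \<le> B"
proof -
  show s: "summable (\<lambda>n. (cmod (c n))\<^sup>2)"
    by (rule bounded_imp_summable[where B=B]) (use assms[of "Suc _"] in \<open>simp_all add: lessThan_Suc_atMost\<close>)
  show "(\<Sum>n. (cmod (c n))\<^sup>2) \<le> B" by (rule suminf_le_const[OF s assms])
qed

abbreviation square_summable :: "(nat \<Rightarrow> complex) \<Rightarrow> bool" where
  "square_summable c \<equiv> summable (\<lambda>n. (cmod (c n))\<^sup>2)"

lemma square_summable_coeffs: "orthonormal_seq E \<Longrightarrow> square_summable (\<lambda>n. cinner (E n) x)"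
  using summable_square_bounded(1)[OF Bessel_inequality] by blast

lemma square_summable_op_coeffs: "bounded_clinear X \<Longrightarrow> orthonormal_seq E \<Longrightarrow> square_summable (\<lambda>n. cinner z (X (E n)))"
  by (rule summable_square_bounded(1)[OF sum_square_op_coeffs_le])

lemma square_summable_add: assumes "square_summable c" "square_summable d" shows "square_summable (\<lambda>n. c n + d n)"
proof (rule summable_comparison_test[OF _ summable_add[OF summable_mult[OF assms(1), of 2] summable_mult[OF assms(2), of 2]]])
  show "\<exists>N. \<forall>n\<ge>N. norm ((cmod (c n + d n))\<^sup>2) \<le> 2 * (cmod (c n))\<^sup>2 + 2 * (cmod (d n))\<^sup>2"
  proof (intro exI allI impI)
    fix n
    have "cmod (c n + d n) \<le> cmod (c n) + cmod (d n)" by (rule norm_triangle_ineq)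
    hence "(cmod (c n + d n))\<^sup>2 \<le> (cmod (c n) + cmod (d n))\<^sup>2" by (intro power_mono) auto
    also have "\<dots> \<le> 2 * (cmod (c n))\<^sup>2 + 2 * (cmod (d n))\<^sup>2"
      using zero_le_power2[of "cmod (c n) - cmod (d n)"] unfolding power2_diff power2_sum by linarith
    finally show "norm ((cmod (c n + d n))\<^sup>2) \<le> 2 * (cmod (c n))\<^sup>2 + 2 * (cmod (d n))\<^sup>2" by simp
  qed
qed

lemma square_summable_mult: "square_summable c \<Longrightarrow> square_summable (\<lambda>n. a * c n)"
  using summable_mult[of "\<lambda>n. (cmod (c n))\<^sup>2" "(cmod a)\<^sup>2"] by (simp add: norm_mult power_mult_distrib)

lemma square_summable_sum: "(\<And>l. l \<in> L \<Longrightarrow> square_summable (d l)) \<Longrightarrow> square_summable (\<lambda>n. \<Sum>l\<in>L. d l n)"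
proof (induction L rule: infinite_finite_induct)
  case (insert a L) thus ?case by (simp add: square_summable_add)
qed simp_all

definition expansion :: "(nat \<Rightarrow> 'a::complex_inner) \<Rightarrow> (nat \<Rightarrow> complex) \<Rightarrow> 'a" where
  "expansion E c = (\<Sum>n. c n *\<^sub>C E n)"

lemma summable_expansion:
  fixes E :: "nat \<Rightarrow> 'a::chilbert_space"
  assumes o: "orthonormal_seq E" and c: "square_summable c"
  shows "summable (\<lambda>n. c n *\<^sub>C E n)"
  unfolding summable_Cauchy
proof (intro allI impI)
  fix e :: real assume e: "e > 0"
  obtain N where N: "\<And>m n. m \<ge> N \<Longrightarrow> norm (\<Sum>k\<in>{m..<n}. (cmod (c k))\<^sup>2) < e\<^sup>2"
    using c[unfolded summable_Cauchy] e by (meson zero_less_power)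
  show "\<exists>N. \<forall>m\<ge>N. \<forall>n. norm (\<Sum>k\<in>{m..<n}. c k *\<^sub>C E k) < e"
  proof (intro exI allI impI)
    fix m n assume m: "N \<le> m"
    have "(norm (\<Sum>k\<in>{m..<n}. c k *\<^sub>C E k))\<^sup>2 = (\<Sum>k\<in>{m..<n}. (cmod (c k))\<^sup>2 * nz_ind (E k))"
      by (rule orthonormal_seq_norm_sum[OF o]) simp
    also have "\<dots> \<le> (\<Sum>k\<in>{m..<n}. (cmod (c k))\<^sup>2)" by (intro sum_mono) (simp add: nz_ind_le_1 mult_left_le)
    also have "\<dots> < e\<^sup>2" using N[OF m, of n] by (simp add: sum_nonneg)
    finally show "norm (\<Sum>k\<in>{m..<n}. c k *\<^sub>C E k) < e" using e by (simp add: power_less_imp_less_base)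
  qed
qed

lemma sums_expansion: "orthonormal_seq (E::nat \<Rightarrow> 'a::chilbert_space) \<Longrightarrow> square_summable c \<Longrightarrow> (\<lambda>n. c n *\<^sub>C E n) sums expansion E c"
  unfolding expansion_def by (rule summable_sums[OF summable_expansion])

lemma bounded_linear_cinner_right: "bounded_linear (\<lambda>y. cinner x y)"
  by (rule bounded_bilinear.bounded_linear_right[OF bounded_bilinear_cinner])

lemma bounded_linear_scaleC_right: "bounded_linear (\<lambda>y::'a::complex_inner. a *\<^sub>C y)"
  by (rule bounded_clinear_bounded_linear[OF bounded_clinear_scaleC[OF bounded_clinear_ident]])

lemma cinner_expansion:
  fixes E :: "nat \<Rightarrow> 'a::chilbert_space"
  assumes o: "orthonormal_seq E" and c: "square_summable c"
  shows "cinner (E k) (expansion E c) = (if E k = 0 then 0 else c k)"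
proof -
  have 1: "(\<lambda>n. cinner (E k) (c n *\<^sub>C E n)) sums cinner (E k) (expansion E c)"
    by (rule bounded_linear.sums[OF bounded_linear_cinner_right sums_expansion[OF o c]])
  have eq: "(\<lambda>n. cinner (E k) (c n *\<^sub>C E n)) = (\<lambda>n. if n = k then (if E k = 0 then 0 else c n) else 0)"
    by (rule ext) (simp add: cinner_scaleC_right orthonormal_seq_cinner[OF o])
  have 2: "(\<lambda>n. cinner (E k) (c n *\<^sub>C E n)) sums (if E k = 0 then 0 else c k)"
    unfolding eq using sums_single[of k "\<lambda>n. if E k = 0 then 0 else c n"] by simp
  show ?thesis by (rule sums_unique2[OF 1 2])
qed

lemma norm_expansion_le_suminf:
  fixes E :: "nat \<Rightarrow> 'a::chilbert_space"
  assumes o: "orthonormal_seq E" and c: "square_summable c"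
  shows "(norm (expansion E c))\<^sup>2 \<le> (\<Sum>n. (cmod (c n))\<^sup>2)"
proof -
  have lim: "(\<lambda>N. \<Sum>n<N. c n *\<^sub>C E n) \<longlonglongrightarrow> expansion E c" using sums_expansion[OF o c] by (simp add: sums_def)
  have "(\<lambda>N. (norm (\<Sum>n<N. c n *\<^sub>C E n))\<^sup>2) \<longlonglongrightarrow> (norm (expansion E c))\<^sup>2"
    by (intro tendsto_intros lim)
  moreover have "(norm (\<Sum>n<N. c n *\<^sub>C E n))\<^sup>2 \<le> (\<Sum>n. (cmod (c n))\<^sup>2)" for N
  proof -
    have "(norm (\<Sum>n<N. c n *\<^sub>C E n))\<^sup>2 = (\<Sum>n<N. (cmod (c n))\<^sup>2 * nz_ind (E n))"
      by (rule orthonormal_seq_norm_sum[OF o]) simp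
    also have "\<dots> \<le> (\<Sum>n<N. (cmod (c n))\<^sup>2)" by (intro sum_mono) (simp add: nz_ind_le_1 mult_left_le)
    also have "\<dots> \<le> (\<Sum>n. (cmod (c n))\<^sup>2)" by (rule sum_le_suminf[OF c]) auto
    finally show ?thesis .
  qed
  ultimately show ?thesis by (intro LIMSEQ_le_const2) auto
qed

lemma expansion_add:
  fixes E :: "nat \<Rightarrow> 'a::chilbert_space"
  assumes o: "orthonormal_seq E" and c: "square_summable c" and d: "square_summable d"
  shows "expansion E (\<lambda>n. c n + d n) = expansion E c + expansion E d"
proof -
  have "(\<lambda>n. c n *\<^sub>C E n + d n *\<^sub>C E n) sums (expansion E c + expansion E d)"
    by (rule sums_add[OF sums_expansion[OF o c] sums_expansion[OF o d]])
  hence "(\<lambda>n. (c n + d n) *\<^sub>C E n) sums (expansion E c + expansion E d)" by (simp add: scaleC_add_left)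
  thus ?thesis using sums_expansion[OF o square_summable_add[OF c d]] by (metis sums_unique2)
qed

lemma expansion_scaleC:
  fixes E :: "nat \<Rightarrow> 'a::chilbert_space"
  assumes o: "orthonormal_seq E" and c: "square_summable c"
  shows "expansion E (\<lambda>n. a * c n) = a *\<^sub>C expansion E c"
proof -
  have "(\<lambda>n. a *\<^sub>C (c n *\<^sub>C E n)) sums (a *\<^sub>C expansion E c)"
    by (rule bounded_linear.sums[OF bounded_linear_scaleC_right sums_expansion[OF o c]])
  hence "(\<lambda>n. (a * c n) *\<^sub>C E n) sums (a *\<^sub>C expansion E c)" by (simp add: scaleC_scaleC)
  thus ?thesis using sums_expansion[OF o square_summable_mult[OF c]] by (metis sums_unique2)
qed

lemma expansion_sum:
  fixes E :: "nat \<Rightarrow> 'a::chilbert_space"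
  assumes o: "orthonormal_seq E" and d: "\<And>l. l \<in> L \<Longrightarrow> square_summable (d l)"
  shows "expansion E (\<lambda>n. \<Sum>l\<in>L. d l n) = (\<Sum>l\<in>L. expansion E (d l))"
  using d
proof (induction L rule: infinite_finite_induct)
  case (infinite L) thus ?case by (simp add: expansion_def)
next
  case empty thus ?case by (simp add: expansion_def)
next
  case (insert a L)
  have "expansion E (\<lambda>n. \<Sum>l\<in>insert a L. d l n) = expansion E (\<lambda>n. d a n + (\<Sum>l\<in>L. d l n))"
    using insert(1,2) by simp
  also have "\<dots> = expansion E (d a) + expansion E (\<lambda>n. \<Sum>l\<in>L. d l n)"
    by (rule expansion_add[OF o]) (use insert in \<open>auto intro!: square_summable_sum\<close>)
  finally show ?case using insert by simp
qed

lemma expansion_cong: "(\<And>n. E n \<noteq> 0 \<Longrightarrow> c n = d n) \<Longrightarrow> expansion E c = expansion E d"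
  unfolding expansion_def by (rule arg_cong[where f=suminf]) (metis scaleC_zero_right)

lemma bounded_linear_sums_expansion:
  fixes E :: "nat \<Rightarrow> 'a::chilbert_space" and L :: "'a \<Rightarrow> 'b::real_normed_vector"
  assumes o: "orthonormal_seq E" and c: "square_summable c" and L: "bounded_linear L"
  shows "(\<lambda>n. L (c n *\<^sub>C E n)) sums L (expansion E c)"
  by (rule bounded_linear.sums[OF L sums_expansion[OF o c]])

lemma expansion_diff:
  fixes E :: "nat \<Rightarrow> 'a::chilbert_space"
  assumes o: "orthonormal_seq E" and c: "square_summable c" and d: "square_summable d"
  shows "expansion E (\<lambda>n. c n - d n) = expansion E c - expansion E d"
proof -
  have d': "square_summable (\<lambda>n. (-1) * d n)" by (rule square_summable_mult[OF d])
  have "expansion E (\<lambda>n. c n - d n) = expansion E (\<lambda>n. c n + (-1) * d n)" by simp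
  also have "\<dots> = expansion E c + expansion E (\<lambda>n. (-1) * d n)" by (rule expansion_add[OF o c d'])
  also have "expansion E (\<lambda>n. (-1) * d n) = (-1) *\<^sub>C expansion E d" by (rule expansion_scaleC[OF o d])
  finally show ?thesis by (simp add: scaleC_minus1)
qed

lemma norm_expansion_le:
  fixes E :: "nat \<Rightarrow> 'a::chilbert_space"
  assumes o: "orthonormal_seq E" and b: "\<And>N. (\<Sum>n<N. (cmod (c n))\<^sup>2) \<le> B\<^sup>2" and B: "B \<ge> 0"
  shows "norm (expansion E c) \<le> B"
proof -
  have s: "square_summable c" by (rule summable_square_bounded(1)[OF b])
  have "(norm (expansion E c))\<^sup>2 \<le> (\<Sum>n. (cmod (c n))\<^sup>2)" by (rule norm_expansion_le_suminf[OF o s])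
  also have "\<dots> \<le> B\<^sup>2" by (rule summable_square_bounded(2)[OF b])
  finally have "(norm (expansion E c))\<^sup>2 \<le> B\<^sup>2" .
  thus ?thesis using B by (rule power2_le_imp_le)
qed

definition total_seq :: "(nat \<Rightarrow> 'a::complex_inner) \<Rightarrow> bool" where
  "total_seq E \<longleftrightarrow> (\<forall>x. (\<forall>k. cinner (E k) x = 0) \<longrightarrow> x = 0)"

lemma expansion_coeffs:
  fixes E :: "nat \<Rightarrow> 'a::chilbert_space"
  assumes o: "orthonormal_seq E" and t: "total_seq E"
  shows "expansion E (\<lambda>n. cinner (E n) x) = x"
proof -
  define z where "z = x - expansion E (\<lambda>n. cinner (E n) x)"
  have "cinner (E k) z = 0" for k
    unfolding z_def cinner_diff_right cinner_expansion[OF o square_summable_coeffs[OF o]] by auto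
  hence "z = 0" using t unfolding total_seq_def by blast
  thus ?thesis unfolding z_def by simp
qed

lemma total_seq_eqI:
  fixes E :: "nat \<Rightarrow> 'a::chilbert_space"
  assumes o: "orthonormal_seq E" and t: "total_seq E" and eq: "\<And>k. E k \<noteq> 0 \<Longrightarrow> cinner (E k) x = cinner (E k) y"
  shows "x = y"
proof -
  have "cinner (E k) (x - y) = 0" for k using eq[of k] by (cases "E k = 0") (auto simp: cinner_diff_right)
  thus ?thesis using t unfolding total_seq_def by (metis eq_iff_diff_eq_0)
qed

section \<open>Gram--Schmidt orthonormalisation\<close>

definition orthonormal_list :: "'a::complex_inner list \<Rightarrow> bool" where
  "orthonormal_list L \<longleftrightarrow> (\<forall>i j. i < length L \<longrightarrow> j < length L \<longrightarrow> i \<noteq> j \<longrightarrow> cinner (L!i) (L!j) = 0) \<and>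
     (\<forall>i. i < length L \<longrightarrow> L!i \<noteq> 0 \<longrightarrow> norm (L!i) = 1)"

definition gs_residual :: "'a::complex_inner list \<Rightarrow> 'a \<Rightarrow> 'a" where
  "gs_residual L v = v - (\<Sum>k<length L. cinner (L!k) v *\<^sub>C L!k)"

definition normalize :: "'a::complex_inner \<Rightarrow> 'a" where
  "normalize w = (if w = 0 then 0 else complex_of_real (1 / norm w) *\<^sub>C w)"

lemma orthonormal_list_cinner: "orthonormal_list L \<Longrightarrow> i < length L \<Longrightarrow> j < length L \<Longrightarrow>
  cinner (L!i) (L!j) = (if i = j \<and> L!j \<noteq> 0 then 1 else 0)"
  unfolding orthonormal_list_def by (auto simp: cinner_self_norm)

lemma cinner_orthonormal_list_sum:
  assumes "orthonormal_list L" "j < length L"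
  shows "cinner (L!j) (\<Sum>k<length L. c k *\<^sub>C L!k) = (if L!j \<noteq> 0 then c j else 0)"
proof -
  have "cinner (L!j) (\<Sum>k<length L. c k *\<^sub>C L!k) = (\<Sum>k<length L. c k * cinner (L!j) (L!k))"
    by (simp add: cinner_sum_right cinner_scaleC_right)
  also have "\<dots> = (\<Sum>k<length L. if k = j then (if L!j \<noteq> 0 then c j else 0) else 0)"
    by (intro sum.cong refl) (auto simp: orthonormal_list_cinner[OF assms(1) assms(2)])
  also have "\<dots> = (if L!j \<noteq> 0 then c j else 0)" using assms(2) by simp
  finally show ?thesis .
qed

lemma cinner_gs_residual: "orthonormal_list L \<Longrightarrow> j < length L \<Longrightarrow> cinner (L!j) (gs_residual L v) = 0"
  unfolding gs_residual_def cinner_diff_right by (simp add: cinner_orthonormal_list_sum)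

lemma cinner_normalize: "cinner a w = 0 \<Longrightarrow> cinner a (normalize w) = 0"
  by (simp add: normalize_def cinner_scaleC_right)

lemma norm_normalize: "normalize w \<noteq> 0 \<Longrightarrow> norm (normalize w) = 1"
  by (auto simp: normalize_def norm_scaleC norm_divide split: if_splits)

lemma normalize_eq_0_iff: "normalize w = 0 \<longleftrightarrow> w = 0"
proof
  assume z: "normalize w = 0"
  show "w = 0"
  proof (rule ccontr)
    assume w: "w \<noteq> 0"
    have "norm (normalize w) = 1" using w by (simp add: normalize_def norm_scaleC norm_divide)
    thus False using z by simp
  qed
qed (simp add: normalize_def)

lemma scaleC_norm_normalize: "w = complex_of_real (norm w) *\<^sub>C normalize w"
  by (auto simp: normalize_def scaleC_scaleC scaleC_one)

lemma cinner_cspan_left: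
  assumes "\<And>v. v \<in> V \<Longrightarrow> cinner v x = 0" "y \<in> cspan V"
  shows "cinner y x = 0"
proof -
  obtain W c where W: "finite W" "W \<subseteq> V" "y = (\<Sum>v\<in>W. c v *\<^sub>C v)" using assms(2) unfolding cspan_def by blast
  show ?thesis unfolding W(3) cinner_sum_left cinner_scaleC_left using W(2) assms(1)
    by (intro sum.neutral) auto
qed

lemma orthonormal_list_snocI:
  assumes L: "orthonormal_list L" and o: "\<And>j. j < length L \<Longrightarrow> cinner (L!j) w = 0" and n: "w \<noteq> 0 \<Longrightarrow> norm w = 1"
  shows "orthonormal_list (L @ [w])"
  unfolding orthonormal_list_def
proof (intro conjI allI impI)
  fix i j assume i: "i < length (L @ [w])" and j: "j < length (L @ [w])" and ij: "i \<noteq> j"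
  have i': "i < length L \<or> i = length L" and j': "j < length L \<or> j = length L" using i j by auto
  show "cinner ((L @ [w]) ! i) ((L @ [w]) ! j) = 0"
  proof (cases "i < length L")
    case True
    show ?thesis
    proof (cases "j < length L")
      case True2: True
      thus ?thesis using True L ij unfolding orthonormal_list_def by (simp add: nth_append)
    next
      case False
      hence "j = length L" using j' by simp
      thus ?thesis using True o by (simp add: nth_append)
    qed
  next
    case False
    hence ii: "i = length L" using i' by simp
    hence jj: "j < length L" using j' ij by auto
    have "cinner (L!j) w = 0" using o jj by simp
    hence "cinner w (L!j) = 0" by (metis cinner_commute complex_cnj_zero)
    thus ?thesis using ii jj by (simp add: nth_append)
  qed
next
  fix i assume i: "i < length (L @ [w])" and nz: "(L @ [w]) ! i \<noteq> 0"
  show "norm ((L @ [w]) ! i) = 1"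
  proof (cases "i < length L")
    case True thus ?thesis using L nz unfolding orthonormal_list_def by (simp add: nth_append)
  next
    case False
    hence "i = length L" using i by simp
    thus ?thesis using n nz by simp
  qed
qed

lemma orthonormal_list_snoc_gs:
  assumes "orthonormal_list L"
  shows "orthonormal_list (L @ [normalize (gs_residual L v)])"
  by (rule orthonormal_list_snocI[OF assms]) (simp_all add: cinner_normalize cinner_gs_residual[OF assms] norm_normalize)

lemma in_cspan_snoc_gs:
  assumes "orthonormal_list L"
  shows "v \<in> cspan (set (L @ [normalize (gs_residual L v)]))"
proof -
  let ?r = "gs_residual L v"
  have "v = (\<Sum>k<length L. cinner (L!k) v *\<^sub>C L!k) + complex_of_real (norm ?r) *\<^sub>C normalize ?r"
    using scaleC_norm_normalize[of ?r] unfolding gs_residual_def by simp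
  also have "\<dots> \<in> cspan (set (L @ [normalize ?r]))"
    by (intro cspan_add cspan_sum cspan_scale cspan_superset) auto
  finally show ?thesis .
qed

lemma orthonormal_list_expand:
  assumes "orthonormal_list L" "y \<in> cspan (set L)"
  shows "y = (\<Sum>k<length L. cinner (L!k) y *\<^sub>C L!k)"
proof -
  have S: "(\<Sum>k<length L. cinner (L!k) y *\<^sub>C L!k) \<in> cspan (set L)"
    by (intro cspan_sum cspan_scale cspan_superset) auto
  have "gs_residual L y = y + (-1) *\<^sub>C (\<Sum>k<length L. cinner (L!k) y *\<^sub>C L!k)"
    unfolding gs_residual_def scaleC_minus1 by simp
  also have "\<dots> \<in> cspan (set L)" by (intro cspan_add assms(2) cspan_scale S)
  finally have "gs_residual L y \<in> cspan (set L)" .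
  moreover have "cinner v (gs_residual L y) = 0" if vL: "v \<in> set L" for v
  proof -
    obtain j where "j < length L" "v = L!j" using vL by (auto simp: in_set_conv_nth)
    thus ?thesis using cinner_gs_residual[OF assms(1)] by simp
  qed
  ultimately have "cinner (gs_residual L y) (gs_residual L y) = 0" by (rule cinner_cspan_left[rotated])
  hence "gs_residual L y = 0" by (simp add: cinner_eq_zero_iff)
  thus ?thesis unfolding gs_residual_def by simp
qed

text \<open>The parameter ch supplies the N-th vector to be orthonormalised, given the list
  built so far.\<close>

fun gram_schmidt :: "(nat \<Rightarrow> 'a::complex_inner list \<Rightarrow> 'a) \<Rightarrow> nat \<Rightarrow> 'a list" where
  "gram_schmidt ch 0 = []"
| "gram_schmidt ch (Suc N) = gram_schmidt ch N @ [normalize (gs_residual (gram_schmidt ch N) (ch N (gram_schmidt ch N)))]"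

lemma length_gram_schmidt[simp]: "length (gram_schmidt ch N) = N"
  by (induction N) auto

lemma orthonormal_list_gram_schmidt: "orthonormal_list (gram_schmidt ch N)"
proof (induction N)
  case 0 thus ?case by (simp add: orthonormal_list_def)
next
  case (Suc N) thus ?case by (simp add: orthonormal_list_snoc_gs)
qed

definition gram_schmidt_seq :: "(nat \<Rightarrow> 'a::complex_inner list \<Rightarrow> 'a) \<Rightarrow> nat \<Rightarrow> 'a" where
  "gram_schmidt_seq ch n = gram_schmidt ch (Suc n) ! n"

lemma nth_gram_schmidt: "k < N \<Longrightarrow> gram_schmidt ch N ! k = gram_schmidt_seq ch k"
proof (induction N)
  case 0 thus ?case by simp
next
  case (Suc N)
  show ?case
  proof (cases "k < N")
    case True thus ?thesis using Suc by (simp add: nth_append)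
  next
    case False hence "k = N" using Suc by simp
    thus ?thesis by (simp add: gram_schmidt_seq_def)
  qed
qed

lemma set_gram_schmidt: "set (gram_schmidt ch N) = gram_schmidt_seq ch ` {..<N}"
proof -
  have "set (gram_schmidt ch N) = (\<lambda>i. gram_schmidt ch N ! i) ` {..<N}" by (simp add: set_conv_nth lessThan_def image_Collect)
  also have "\<dots> = gram_schmidt_seq ch ` {..<N}" by (rule image_cong) (auto simp: nth_gram_schmidt)
  finally show ?thesis .
qed

lemma orthonormal_seq_gram_schmidt: "orthonormal_seq (gram_schmidt_seq ch)"
  unfolding orthonormal_seq_def
proof (intro conjI allI impI)
  fix n m :: nat assume nm: "n \<noteq> m"
  let ?N = "Suc (max n m)"
  have "cinner (gram_schmidt ch ?N ! n) (gram_schmidt ch ?N ! m) = 0"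
    using orthonormal_list_gram_schmidt[of ch ?N] nm unfolding orthonormal_list_def by auto
  moreover have "gram_schmidt ch ?N ! n = gram_schmidt_seq ch n" by (rule nth_gram_schmidt) simp
  moreover have "gram_schmidt ch ?N ! m = gram_schmidt_seq ch m" by (rule nth_gram_schmidt) simp
  ultimately show "cinner (gram_schmidt_seq ch n) (gram_schmidt_seq ch m) = 0" by simp
next
  fix n assume "gram_schmidt_seq ch n \<noteq> 0"
  thus "norm (gram_schmidt_seq ch n) = 1" using orthonormal_list_gram_schmidt[of ch "Suc n"] unfolding orthonormal_list_def gram_schmidt_seq_def by auto
qed

lemma in_cspan_gram_schmidt: "ch N (gram_schmidt ch N) \<in> cspan (set (gram_schmidt ch (Suc N)))"
  using in_cspan_snoc_gs[OF orthonormal_list_gram_schmidt] by simp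

lemma separable_total_orthonormal_seq:
  fixes D :: "'a::chilbert_space set"
  assumes "countable D" "closure D = UNIV"
  shows "\<exists>E::nat \<Rightarrow> 'a. orthonormal_seq E \<and> total_seq E"
proof -
  have "D \<noteq> {}" using assms(2) by auto
  define d where "d = from_nat_into D"
  have rd: "range d = D" unfolding d_def using assms(1) \<open>D \<noteq> {}\<close> by simp
  define ch where "ch = (\<lambda>N (L::'a list). d N)"
  define E where "E = gram_schmidt_seq ch"
  have "total_seq E" unfolding total_seq_def
  proof (intro allI impI)
    fix x assume x: "\<forall>k. cinner (E k) x = 0"
    have dN: "cinner (d N) x = 0" for N
    proof (rule cinner_cspan_left[of "set (gram_schmidt ch (Suc N))"])
      show "d N \<in> cspan (set (gram_schmidt ch (Suc N)))" using in_cspan_gram_schmidt[of ch N] by (simp add: ch_def)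
      show "cinner v x = 0" if "v \<in> set (gram_schmidt ch (Suc N))" for v
        using that x unfolding set_gram_schmidt E_def by auto
    qed
    have "x \<in> closure (range d)" using assms(2) rd by simp
    then obtain f where f: "\<And>n. f n \<in> range d" "f \<longlonglongrightarrow> x" unfolding closure_sequential by blast
    have "(\<lambda>n. cinner (f n) x) \<longlonglongrightarrow> cinner x x"
      by (rule bounded_bilinear.tendsto[OF bounded_bilinear_cinner f(2) tendsto_const])
    moreover have "cinner (f n) x = 0" for n using f(1)[of n] dN by auto
    ultimately have "cinner x x = 0" by (simp add: LIMSEQ_const_iff)
    thus "x = 0" by (simp add: cinner_eq_zero_iff)
  qed
  thus ?thesis using orthonormal_seq_gram_schmidt[of ch] unfolding E_def by blast
qed

lemma infinite_dim_orthonormal_seq: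
  assumes "\<not> cfinite_dim TYPE('a::complex_inner)"
  shows "\<exists>U::nat \<Rightarrow> 'a. orthonormal_seq U \<and> (\<forall>n. U n \<noteq> 0)"
proof -
  have nf: "\<exists>y. y \<notin> cspan (set L)" for L :: "'a list"
    using assms unfolding cfinite_dim_def by blast
  define ch where "ch = (\<lambda>(N::nat) (L::'a list). SOME y. y \<notin> cspan (set L))"
  have chL: "ch N L \<notin> cspan (set L)" for N L unfolding ch_def using someI_ex[OF nf[of L]] by simp
  have "gram_schmidt_seq ch n \<noteq> 0" for n
  proof
    assume z: "gram_schmidt_seq ch n = 0"
    let ?L = "gram_schmidt ch n"
    have "gs_residual ?L (ch n ?L) = 0"
    proof (rule ccontr)
      assume "gs_residual ?L (ch n ?L) \<noteq> 0"
      hence "normalize (gs_residual ?L (ch n ?L)) \<noteq> 0" by (simp add: normalize_eq_0_iff)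
      moreover have "gram_schmidt_seq ch n = normalize (gs_residual ?L (ch n ?L))"
        unfolding gram_schmidt_seq_def using nth_append_length[of ?L] by simp
      ultimately show False using z by simp
    qed
    hence "ch n ?L = (\<Sum>k<length ?L. cinner (?L!k) (ch n ?L) *\<^sub>C ?L!k)" unfolding gs_residual_def by simp
    also have "\<dots> \<in> cspan (set ?L)" by (intro cspan_sum cspan_scale cspan_superset) auto
    finally show False using chL by blast
  qed
  thus ?thesis using orthonormal_seq_gram_schmidt[of ch] by blast
qed

lemma finite_cspan_orthonormal_list:
  assumes "finite V"
  shows "\<exists>L. orthonormal_list L \<and> length L = card V \<and> V \<subseteq> cspan (set L)"
proof -
  obtain vs where vs: "set vs = V" "distinct vs" using finite_distinct_list[OF assms] by blast
  define ch where "ch = (\<lambda>(N::nat) (L::'a list). vs ! N)"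
  define L where "L = gram_schmidt ch (length vs)"
  have "V \<subseteq> cspan (set L)"
  proof
    fix v assume "v \<in> V"
    then obtain N where N: "N < length vs" "v = vs ! N" using vs(1) by (metis in_set_conv_nth)
    have "v \<in> cspan (set (gram_schmidt ch (Suc N)))" using in_cspan_gram_schmidt[of ch N] N by (simp add: ch_def)
    also have "\<dots> \<subseteq> cspan (set L)" unfolding L_def
      by (rule cspan_mono) (use N in \<open>simp only: set_gram_schmidt, auto\<close>)
    finally show "v \<in> cspan (set L)" .
  qed
  moreover have "length L = card V" unfolding L_def using vs distinct_card by fastforce
  ultimately show ?thesis using orthonormal_list_gram_schmidt unfolding L_def by blast
qed

section \<open>Transfer of coordinates between Hilbert spaces\<close>

definition basis_transfer :: "(nat \<Rightarrow> 'a::complex_inner) \<Rightarrow> (nat \<Rightarrow> 'b::complex_inner) \<Rightarrow> 'a \<Rightarrow> 'b" where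
  "basis_transfer E F x = expansion F (\<lambda>n. cinner (E n) x)"

lemma norm_basis_transfer_le:
  fixes E :: "nat \<Rightarrow> 'a::chilbert_space" and F :: "nat \<Rightarrow> 'b::chilbert_space"
  assumes "orthonormal_seq E" "orthonormal_seq F"
  shows "norm (basis_transfer E F x) \<le> norm x"
  unfolding basis_transfer_def by (rule norm_expansion_le[OF assms(2) Bessel_inequality[OF assms(1)]]) simp

lemma bounded_clinear_basis_transfer:
  fixes E :: "nat \<Rightarrow> 'a::chilbert_space" and F :: "nat \<Rightarrow> 'b::chilbert_space"
  assumes oE: "orthonormal_seq E" and oF: "orthonormal_seq F"
  shows "bounded_clinear (basis_transfer E F)"
proof (rule bounded_clinearI[where K=1])
  show "clinear (basis_transfer E F)"
  proof (rule clinearI)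
    fix x y
    show "basis_transfer E F (x + y) = basis_transfer E F x + basis_transfer E F y" unfolding basis_transfer_def cinner_add_right
      by (rule expansion_add[OF oF square_summable_coeffs[OF oE] square_summable_coeffs[OF oE]])
  next
    fix c x
    show "basis_transfer E F (c *\<^sub>C x) = c *\<^sub>C basis_transfer E F x" unfolding basis_transfer_def cinner_scaleC_right
      by (rule expansion_scaleC[OF oF square_summable_coeffs[OF oE]])
  qed
  fix x show "norm (basis_transfer E F x) \<le> norm x * 1" using norm_basis_transfer_le[OF oE oF] by simp
qed

lemma onorm_basis_transfer_le:
  fixes E :: "nat \<Rightarrow> 'a::chilbert_space" and F :: "nat \<Rightarrow> 'b::chilbert_space"
  assumes oE: "orthonormal_seq E" and oF: "orthonormal_seq F"
  shows "onorm (basis_transfer E F) \<le> 1"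
  by (rule onorm_bound) (simp_all add: norm_basis_transfer_le[OF oE oF])

lemma cinner_basis_transfer:
  fixes E :: "nat \<Rightarrow> 'a::chilbert_space" and F :: "nat \<Rightarrow> 'b::chilbert_space"
  assumes oE: "orthonormal_seq E" and oF: "orthonormal_seq F"
  shows "cinner (F k) (basis_transfer E F x) = (if F k = 0 then 0 else cinner (E k) x)"
  unfolding basis_transfer_def by (rule cinner_expansion[OF oF square_summable_coeffs[OF oE]])

lemma basis_transfer_inverse:
  fixes E :: "nat \<Rightarrow> 'a::chilbert_space" and F :: "nat \<Rightarrow> 'b::chilbert_space"
  assumes oE: "orthonormal_seq E" and tE: "total_seq E" and oF: "orthonormal_seq F" and nF: "\<And>n. F n \<noteq> 0"
  shows "basis_transfer F E (basis_transfer E F x) = x"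
proof -
  have "basis_transfer F E (basis_transfer E F x) = expansion E (\<lambda>n. cinner (E n) x)"
    unfolding basis_transfer_def[of F E] by (rule expansion_cong) (simp add: cinner_basis_transfer[OF oE oF] nF)
  also have "\<dots> = x" by (rule expansion_coeffs[OF oE tE])
  finally show ?thesis .
qed

section \<open>Transposition\<close>

definition conj_coords :: "(nat \<Rightarrow> 'a::complex_inner) \<Rightarrow> 'a \<Rightarrow> 'a" where
  "conj_coords E y = expansion E (\<lambda>m. cinner y (E m))"

lemma sum_square_cinner_commute: "(\<Sum>n<N. (cmod (cinner y (E n)))\<^sup>2) = (\<Sum>n<N. (cmod (cinner (E n) y))\<^sup>2)"
  by (intro sum.cong refl) (metis cinner_commute complex_mod_cnj)

lemma square_summable_conj_coeffs: "orthonormal_seq E \<Longrightarrow> square_summable (\<lambda>m. cinner y (E m))"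
  by (rule summable_square_bounded(1)[of _ "(norm y)\<^sup>2"]) (simp add: sum_square_cinner_commute Bessel_inequality)

lemma norm_conj_coords_le:
  fixes E :: "nat \<Rightarrow> 'a::chilbert_space"
  assumes o: "orthonormal_seq E" shows "norm (conj_coords E y) \<le> norm y"
  unfolding conj_coords_def by (rule norm_expansion_le[OF o]) (simp_all add: sum_square_cinner_commute Bessel_inequality[OF o])

lemma cinner_conj_coords:
  fixes E :: "nat \<Rightarrow> 'a::chilbert_space"
  assumes o: "orthonormal_seq E" shows "cinner (E k) (conj_coords E y) = (if E k = 0 then 0 else cinner y (E k))"
  unfolding conj_coords_def by (rule cinner_expansion[OF o square_summable_conj_coeffs[OF o]])

lemma conj_coords_add:
  fixes E :: "nat \<Rightarrow> 'a::chilbert_space"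
  assumes o: "orthonormal_seq E" shows "conj_coords E (x + y) = conj_coords E x + conj_coords E y"
  unfolding conj_coords_def cinner_add_left by (rule expansion_add[OF o square_summable_conj_coeffs[OF o] square_summable_conj_coeffs[OF o]])

lemma conj_coords_scaleC:
  fixes E :: "nat \<Rightarrow> 'a::chilbert_space"
  assumes o: "orthonormal_seq E" shows "conj_coords E (c *\<^sub>C y) = cnj c *\<^sub>C conj_coords E y"
  unfolding conj_coords_def cinner_scaleC_left by (rule expansion_scaleC[OF o square_summable_conj_coeffs[OF o]])

lemma conj_coords_basis:
  fixes E :: "nat \<Rightarrow> 'a::chilbert_space"
  assumes o: "orthonormal_seq E" and t: "total_seq E" shows "conj_coords E (E k) = E k"
proof (rule total_seq_eqI[OF o t])
  fix j assume "E j \<noteq> 0"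
  thus "cinner (E j) (conj_coords E (E k)) = cinner (E j) (E k)"
    by (simp add: cinner_conj_coords[OF o] orthonormal_seq_cinner[OF o])
qed

lemma cinner_conj_coords_basis:
  fixes E :: "nat \<Rightarrow> 'a::chilbert_space"
  assumes o: "orthonormal_seq E" shows "cinner (conj_coords E y) (E n) = (if E n = 0 then 0 else cinner (E n) y)"
proof -
  have "cinner (conj_coords E y) (E n) = cnj (cinner (E n) (conj_coords E y))" by (rule cinner_commute)
  also have "\<dots> = (if E n = 0 then 0 else cinner (E n) y)"
    by (simp add: cinner_conj_coords[OF o]) (metis cinner_commute)
  finally show ?thesis .
qed

text \<open>The transpose of X with respect to E: its matrix entries are those of X with the
  indices swapped.\<close>

definition transpose_op :: "(nat \<Rightarrow> 'a::complex_inner) \<Rightarrow> ('a \<Rightarrow> 'a) \<Rightarrow> 'a \<Rightarrow> 'a" where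
  "transpose_op E X y = expansion E (\<lambda>n. cinner (conj_coords E y) (X (E n)))"

lemma norm_transpose_op_le:
  fixes E :: "nat \<Rightarrow> 'a::chilbert_space"
  assumes o: "orthonormal_seq E" and X: "bounded_clinear X"
  shows "norm (transpose_op E X y) \<le> onorm X * norm y"
  unfolding transpose_op_def
proof (rule norm_expansion_le[OF o])
  fix N
  have "(\<Sum>n<N. (cmod (cinner (conj_coords E y) (X (E n))))\<^sup>2) \<le> (onorm X * norm (conj_coords E y))\<^sup>2"
    by (rule sum_square_op_coeffs_le[OF X o])
  also have "\<dots> \<le> (onorm X * norm y)\<^sup>2"
    by (intro power_mono mult_left_mono norm_conj_coords_le[OF o] onorm_nonneg[OF X]) (simp add: onorm_nonneg[OF X])
  finally show "(\<Sum>n<N. (cmod (cinner (conj_coords E y) (X (E n))))\<^sup>2) \<le> (onorm X * norm y)\<^sup>2" .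
  show "0 \<le> onorm X * norm y" by (simp add: onorm_nonneg[OF X])
qed

lemma bounded_clinear_transpose_op:
  fixes E :: "nat \<Rightarrow> 'a::chilbert_space"
  assumes o: "orthonormal_seq E" and X: "bounded_clinear X"
  shows "bounded_clinear (transpose_op E X)"
proof (rule bounded_clinearI[where K="onorm X"])
  show "clinear (transpose_op E X)"
  proof (rule clinearI)
    fix x y
    show "transpose_op E X (x + y) = transpose_op E X x + transpose_op E X y" unfolding transpose_op_def conj_coords_add[OF o] cinner_add_left
      by (rule expansion_add[OF o square_summable_op_coeffs[OF X o] square_summable_op_coeffs[OF X o]])
  next
    fix c x
    show "transpose_op E X (c *\<^sub>C x) = c *\<^sub>C transpose_op E X x" unfolding transpose_op_def conj_coords_scaleC[OF o] cinner_scaleC_left complex_cnj_cnj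
      by (rule expansion_scaleC[OF o square_summable_op_coeffs[OF X o]])
  qed
  fix x show "norm (transpose_op E X x) \<le> norm x * onorm X" using norm_transpose_op_le[OF o X] by (simp add: mult.commute)
qed

lemma onorm_transpose_op_le:
  fixes E :: "nat \<Rightarrow> 'a::chilbert_space"
  assumes o: "orthonormal_seq E" and X: "bounded_clinear X"
  shows "onorm (transpose_op E X) \<le> onorm X"
  by (rule onorm_bound) (simp_all add: norm_transpose_op_le[OF o X] onorm_nonneg[OF X])

lemma transpose_op_diff:
  fixes E :: "nat \<Rightarrow> 'a::chilbert_space"
  assumes o: "orthonormal_seq E" and X: "bounded_clinear X" and F: "bounded_clinear F"
  shows "transpose_op E (\<lambda>x. X x - F x) y = transpose_op E X y - transpose_op E F y"
  unfolding transpose_op_def cinner_diff_right by (rule expansion_diff[OF o square_summable_op_coeffs[OF X o] square_summable_op_coeffs[OF F o]])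

lemma cinner_expansion_sums:
  fixes E :: "nat \<Rightarrow> 'a::chilbert_space"
  assumes o: "orthonormal_seq E" and c: "square_summable c"
  shows "(\<lambda>n. c n * cinner z (E n)) sums cinner z (expansion E c)"
  using bounded_linear_sums_expansion[OF o c bounded_linear_cinner_right[of z]] by (simp add: cinner_scaleC_right)

lemma transpose_op_transpose_op:
  fixes E :: "nat \<Rightarrow> 'a::chilbert_space"
  assumes o: "orthonormal_seq E" and t: "total_seq E" and X: "bounded_clinear X"
  shows "transpose_op E (transpose_op E X) y = X y"
proof (rule total_seq_eqI[OF o t])
  fix k assume k: "E k \<noteq> 0"
  have "cinner (E k) (transpose_op E (transpose_op E X) y) = cinner (conj_coords E y) (transpose_op E X (E k))"
    unfolding transpose_op_def[of E "transpose_op E X"] using k by (simp add: cinner_expansion[OF o square_summable_op_coeffs[OF bounded_clinear_transpose_op[OF o X] o]])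
  also have "transpose_op E X (E k) = expansion E (\<lambda>n. cinner (E k) (X (E n)))"
    unfolding transpose_op_def conj_coords_basis[OF o t] ..
  finally have 1: "cinner (E k) (transpose_op E (transpose_op E X) y) = cinner (conj_coords E y) (expansion E (\<lambda>n. cinner (E k) (X (E n))))" .
  have "(\<lambda>n. cinner (E k) (X (E n)) * cinner (conj_coords E y) (E n)) sums cinner (conj_coords E y) (expansion E (\<lambda>n. cinner (E k) (X (E n))))"
    by (rule cinner_expansion_sums[OF o square_summable_op_coeffs[OF X o]])
  moreover have "(\<lambda>n. cinner (E k) (X (E n)) * cinner (conj_coords E y) (E n)) = (\<lambda>n. cinner (E k) (X (cinner (E n) y *\<^sub>C E n)))"
    by (rule ext) (simp add: cinner_conj_coords_basis[OF o] clinear_scaleC[OF bounded_clinear_clinear[OF X]]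
        clinear_zero[OF bounded_clinear_clinear[OF X]] cinner_scaleC_right mult.commute)
  ultimately have 2: "(\<lambda>n. cinner (E k) (X (cinner (E n) y *\<^sub>C E n))) sums cinner (conj_coords E y) (expansion E (\<lambda>n. cinner (E k) (X (E n))))"
    by simp
  have 3: "(\<lambda>n. cinner (E k) (X (cinner (E n) y *\<^sub>C E n))) sums cinner (E k) (X (expansion E (\<lambda>n. cinner (E n) y)))"
    by (rule bounded_linear_sums_expansion[OF o square_summable_coeffs[OF o]]) (rule bounded_linear_compose[OF bounded_linear_cinner_right bounded_clinear_bounded_linear[OF X]])
  show "cinner (E k) (transpose_op E (transpose_op E X) y) = cinner (E k) (X y)"
    unfolding 1 using sums_unique2[OF 2 3] expansion_coeffs[OF o t, of y] by simp
qed

lemma crank_transpose_op: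
  fixes E :: "nat \<Rightarrow> 'a::chilbert_space"
  assumes o: "orthonormal_seq E" and F: "bounded_clinear F" and r: "crank F < enat N"
  shows "crank (transpose_op E F) < enat N"
proof -
  obtain V where V: "finite V" "range F \<subseteq> cspan V" "card V < N" using r unfolding crank_lt_iff by blast
  obtain L where L: "orthonormal_list L" "length L = card V" "V \<subseteq> cspan (set L)" using finite_cspan_orthonormal_list[OF V(1)] by blast
  have rF: "range F \<subseteq> cspan (set L)" using V(2) cspan_minimal[OF L(3)] by blast
  define z where "z l = expansion E (\<lambda>n. cinner (L!l) (F (E n)))" for l
  have "range (transpose_op E F) \<subseteq> cspan (z ` {..<length L})"
  proof
    fix w assume "w \<in> range (transpose_op E F)"
    then obtain y where y: "w = transpose_op E F y" by blast
    have ex: "F (E n) = (\<Sum>l<length L. cinner (L!l) (F (E n)) *\<^sub>C L!l)" for n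
      using orthonormal_list_expand[OF L(1)] rF by blast
    have "w = expansion E (\<lambda>n. \<Sum>l<length L. cinner (conj_coords E y) (L!l) * cinner (L!l) (F (E n)))"
      unfolding y transpose_op_def by (rule expansion_cong) (subst ex, simp add: cinner_sum_right cinner_scaleC_right mult.commute)
    also have "\<dots> = (\<Sum>l<length L. expansion E (\<lambda>n. cinner (conj_coords E y) (L!l) * cinner (L!l) (F (E n))))"
      by (rule expansion_sum[OF o]) (intro square_summable_mult square_summable_op_coeffs[OF F o])
    also have "\<dots> = (\<Sum>l<length L. cinner (conj_coords E y) (L!l) *\<^sub>C z l)"
      unfolding z_def by (intro sum.cong refl expansion_scaleC[OF o square_summable_op_coeffs[OF F o]])
    also have "\<dots> \<in> cspan (z ` {..<length L})" by (intro cspan_sum cspan_scale cspan_superset) auto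
    finally show "w \<in> cspan (z ` {..<length L})" .
  qed
  moreover have "card (z ` {..<length L}) < N" using card_image_le[of "{..<length L}" z] L(2) V(3) by simp
  ultimately show ?thesis unfolding crank_lt_iff by blast
qed

lemma approx_num_transpose_op_le:
  fixes E :: "nat \<Rightarrow> 'a::chilbert_space"
  assumes o: "orthonormal_seq E" and X: "bounded_clinear X" and N: "N \<ge> 1"
  shows "approx_num N (transpose_op E X) \<le> approx_num N X"
proof (rule field_le_epsilon_scaled[where K=1])
  fix e :: real assume e: "e > 0"
  have "approx_num N X < approx_num N X + e" using e by linarith
  from approx_num_less_witness[OF X N this]
  obtain F where F: "bounded_clinear F" "crank F < enat N" "onorm (\<lambda>x. X x - F x) < approx_num N X + e"
    by blast
  have "approx_num N (transpose_op E X) \<le> onorm (\<lambda>x. transpose_op E X x - transpose_op E F x)"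
    by (rule approx_num_le_onorm_diff[OF bounded_clinear_transpose_op[OF o X] bounded_clinear_transpose_op[OF o F(1)] crank_transpose_op[OF o F(1,2)]])
  also have "(\<lambda>x. transpose_op E X x - transpose_op E F x) = transpose_op E (\<lambda>x. X x - F x)"
    by (rule ext) (simp add: transpose_op_diff[OF o X F(1)])
  also have "onorm \<dots> \<le> onorm (\<lambda>x. X x - F x)" by (rule onorm_transpose_op_le[OF o bounded_clinear_diff[OF X F(1)]])
  finally show "approx_num N (transpose_op E X) \<le> approx_num N X + 1 * e" using F(3) by simp
qed

lemma approx_num_le_transpose_op:
  fixes E :: "nat \<Rightarrow> 'a::chilbert_space"
  assumes o: "orthonormal_seq E" and t: "total_seq E" and X: "bounded_clinear X" and N: "N \<ge> 1"
  shows "approx_num N X \<le> approx_num N (transpose_op E X)"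
proof -
  have "transpose_op E (transpose_op E X) = X" by (rule ext) (rule transpose_op_transpose_op[OF o t X])
  hence "approx_num N X = approx_num N (transpose_op E (transpose_op E X))" by simp
  also have "\<dots> \<le> approx_num N (transpose_op E X)" by (rule approx_num_transpose_op_le[OF o bounded_clinear_transpose_op[OF o X] N])
  finally show ?thesis .
qed

section \<open>Dual systems for linearly independent operators\<close>

definition pair_functional :: "('a::complex_inner \<times> 'b) list \<Rightarrow> ('b \<Rightarrow> 'a) \<Rightarrow> complex" where
  "pair_functional ps X = sum_list (map (\<lambda>p. cinner (fst p) (X (snd p))) ps)"

lemma pair_functional_append: "pair_functional (ps @ qs) X = pair_functional ps X + pair_functional qs X"
  by (simp add: pair_functional_def)

lemma pair_functional_scale: "pair_functional (map (\<lambda>p. (cnj c *\<^sub>C fst p, snd p)) ps) X = c * pair_functional ps X"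
  by (induction ps) (simp_all add: pair_functional_def cinner_scaleC_left algebra_simps)

lemma pair_functional_lincomb_op: "pair_functional ps (\<lambda>h. \<Sum>j\<in>J. a j *\<^sub>C T j h) = (\<Sum>j\<in>J. a j * pair_functional ps (T j))"
proof (induction ps)
  case Nil thus ?case by (simp add: pair_functional_def)
next
  case (Cons p ps)
  have "pair_functional (p # ps) (\<lambda>h. \<Sum>j\<in>J. a j *\<^sub>C T j h) = cinner (fst p) (\<Sum>j\<in>J. a j *\<^sub>C T j (snd p)) + pair_functional ps (\<lambda>h. \<Sum>j\<in>J. a j *\<^sub>C T j h)"
    by (simp add: pair_functional_def)
  also have "\<dots> = (\<Sum>j\<in>J. a j * cinner (fst p) (T j (snd p))) + (\<Sum>j\<in>J. a j * pair_functional ps (T j))"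
    by (simp add: Cons cinner_sum_right cinner_scaleC_right)
  also have "\<dots> = (\<Sum>j\<in>J. a j * pair_functional (p # ps) (T j))"
    by (simp add: pair_functional_def sum.distrib algebra_simps)
  finally show ?case .
qed

lemma pair_functional_lincomb: "\<exists>ps. \<forall>X. pair_functional ps X = (\<Sum>i<(m::nat). a i * pair_functional (qs i) X)"
proof (induction m)
  case 0 show ?case by (rule exI[of _ "[]"]) (simp add: pair_functional_def)
next
  case (Suc m)
  then obtain ps where ps: "\<forall>X. pair_functional ps X = (\<Sum>i<m. a i * pair_functional (qs i) X)" by blast
  show ?case
    by (rule exI[of _ "ps @ map (\<lambda>p. (cnj (a m) *\<^sub>C fst p, snd p)) (qs m)"])
       (simp add: pair_functional_append pair_functional_scale ps)
qed

lemma clin_indep_ops_Suc_imp: "clin_indep_ops (Suc m) T \<Longrightarrow> clin_indep_ops m T"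
  unfolding clin_indep_ops_def
proof (intro allI impI)
  fix c i
  assume H: "\<forall>c. (\<forall>x. (\<Sum>i<Suc m. c i *\<^sub>C T i x) = 0) \<longrightarrow> (\<forall>i<Suc m. c i = 0)"
    and z: "\<forall>x. (\<Sum>i<m. c i *\<^sub>C T i x) = 0" and i: "i < m"
  define c' where "c' j = (if j < m then c j else 0)" for j
  have "\<forall>x. (\<Sum>j<Suc m. c' j *\<^sub>C T j x) = 0" using z by (simp add: c'_def)
  hence "c' i = 0" using H i by auto
  thus "c i = 0" using i by (simp add: c'_def)
qed

lemma pair_functional_eq_1:
  fixes X :: "'b \<Rightarrow> 'a::complex_inner"
  assumes "X x \<noteq> 0"
  shows "\<exists>ps. pair_functional ps X = 1"
proof -
  define a where "a = complex_of_real (1 / (norm (X x))\<^sup>2) *\<^sub>C X x"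
  have "cinner a (X x) = complex_of_real (1 / (norm (X x))\<^sup>2) * complex_of_real ((norm (X x))\<^sup>2)"
    by (simp add: a_def cinner_scaleC_left cinner_self_norm del: of_real_power)
  hence "cinner a (X x) = 1" using assms by (simp del: of_real_power add: of_real_mult[symmetric])
  hence "pair_functional [(a, x)] X = 1" by (simp add: pair_functional_def)
  thus ?thesis by blast
qed

text \<open>Inductive step of the construction of a dual system: the functional dual to the
  new operator T m is found on the part of T m independent of T 0, ..., T (m-1).\<close>

lemma indep_ops_extend_dual:
  fixes T :: "nat \<Rightarrow> 'a \<Rightarrow> 'a::complex_inner"
  assumes ind: "clin_indep_ops (Suc m) T"
    and P: "\<And>i j. i < m \<Longrightarrow> j < m \<Longrightarrow> pair_functional (P i) (T j) = (if j = i then 1 else 0)"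
  shows "\<exists>E. \<forall>j<Suc m. pair_functional E (T j) = (if j = m then 1 else 0)"
proof -
  define a where "a i = (if i < m then - pair_functional (P i) (T m) else 1)" for i
  define T' where "T' h = (\<Sum>i<Suc m. a i *\<^sub>C T i h)" for h
  obtain f where "T' f \<noteq> 0"
  proof (rule ccontr)
    assume "\<not> thesis"
    hence "\<forall>x. T' x = 0" using that by blast
    hence "a m = 0" using ind unfolding clin_indep_ops_def T'_def by blast
    thus False by (simp add: a_def)
  qed
  then obtain q where q: "pair_functional q T' = 1" using pair_functional_eq_1[of T'] by blast
  obtain p where p: "\<forall>X. pair_functional p X = (\<Sum>i<m. (- pair_functional q (T i)) * pair_functional (P i) X)"
    using pair_functional_lincomb[where m=m and a="\<lambda>i. - pair_functional q (T i)" and qs=P] by blast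
  have "pair_functional (q @ p) (T j) = (if j = m then 1 else 0)" if j: "j < Suc m" for j
  proof (cases "j = m")
    case True
    have "pair_functional q T' = (\<Sum>i<Suc m. a i * pair_functional q (T i))"
      unfolding T'_def by (rule pair_functional_lincomb_op)
    also have "\<dots> = pair_functional q (T m) + (\<Sum>i<m. (- pair_functional (P i) (T m)) * pair_functional q (T i))"
      by (simp add: a_def)
    finally have "pair_functional q (T m) +
        (\<Sum>i<m. (- pair_functional q (T i)) * pair_functional (P i) (T m)) = 1"
      using q by (simp add: mult.commute)
    thus ?thesis using True by (simp add: pair_functional_append p)
  next
    case False
    hence jm: "j < m" using j by simp
    have "(\<Sum>i<m. (- pair_functional q (T i)) * pair_functional (P i) (T j)) =
        (\<Sum>i<m. if i = j then - pair_functional q (T j) else 0)"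
      by (intro sum.cong refl) (simp add: P jm)
    also have "\<dots> = - pair_functional q (T j)" using jm by simp
    finally have "(\<Sum>i<m. (- pair_functional q (T i)) * pair_functional (P i) (T j)) = - pair_functional q (T j)" .
    thus ?thesis using False by (simp add: pair_functional_append p)
  qed
  thus ?thesis by blast
qed

lemma indep_ops_dual_functionals:
  fixes T :: "nat \<Rightarrow> 'a \<Rightarrow> 'a::complex_inner"
  assumes "clin_indep_ops m T" "i < m"
  shows "\<exists>ps. \<forall>j<m. pair_functional ps (T j) = (if j = i then 1 else 0)"
  using assms
proof (induction m arbitrary: i)
  case 0 thus ?case by simp
next
  case (Suc m)
  have "\<forall>i<m. \<exists>ps. \<forall>j<m. pair_functional ps (T j) = (if j = i then 1 else 0)"
    using Suc.IH clin_indep_ops_Suc_imp[OF Suc.prems(1)] by blast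
  then obtain P where P: "\<And>i j. i < m \<Longrightarrow> j < m \<Longrightarrow> pair_functional (P i) (T j) = (if j = i then 1 else 0)"
    by metis
  obtain E where E: "\<And>j. j < Suc m \<Longrightarrow> pair_functional E (T j) = (if j = m then 1 else 0)"
    using indep_ops_extend_dual[OF Suc.prems(1) P] by blast
  show ?case
  proof (cases "i = m")
    case True thus ?thesis using E by blast
  next
    case False
    hence im: "i < m" using Suc.prems(2) by simp
    define c where "c = - pair_functional (P i) (T m)"
    define Q where "Q = P i @ map (\<lambda>p. (cnj c *\<^sub>C fst p, snd p)) E"
    have Q: "pair_functional Q X = pair_functional (P i) X + c * pair_functional E X" for X
      unfolding Q_def by (simp only: pair_functional_append pair_functional_scale)
    have "pair_functional Q (T j) = (if j = i then 1 else 0)" if "j < Suc m" for j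
    proof (cases "j = m")
      case True thus ?thesis using im E[OF that] by (simp add: Q c_def)
    next
      case False
      hence "j < m" using that by simp
      thus ?thesis using E[OF that] False P[OF im] by (simp add: Q)
    qed
    thus ?thesis by blast
  qed
qed

lemma pair_functional_nth: "pair_functional ps X = (\<Sum>k<length ps. cinner (fst (ps!k)) (X (snd (ps!k))))"
  unfolding pair_functional_def by (simp add: sum_list_sum_nth atLeast0LessThan)

lemma pair_functional_replicate_zero: "pair_functional (replicate k (0, x)) X = 0"
  by (induction k) (simp_all add: pair_functional_def)

lemma indep_ops_dual_pairs:
  fixes T :: "nat \<Rightarrow> 'a \<Rightarrow> 'a::complex_inner"
  assumes "clin_indep_ops m T"
  obtains r :: nat and a b where "r \<ge> 1"
    "\<And>i j. i < m \<Longrightarrow> j < m \<Longrightarrow> (\<Sum>k<r. cinner (a i k) (T j (b i k))) = (if j = i then 1 else 0)"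
proof -
  have "\<forall>i. \<exists>ps. i < m \<longrightarrow> (\<forall>j<m. pair_functional ps (T j) = (if j = i then 1 else 0))"
    using indep_ops_dual_functionals[OF assms] by blast
  then obtain ps where ps: "\<And>i j. i < m \<Longrightarrow> j < m \<Longrightarrow> pair_functional (ps i) (T j) = (if j = i then 1 else 0)"
    by metis
  define r where "r = Suc (\<Sum>i<m. length (ps i))"
  have "length (ps i) \<le> r" if "i < m" for i
    using member_le_sum[of i "{..<m}" "\<lambda>i. length (ps i)"] that by (simp add: r_def)
  hence len: "length (ps i @ replicate (r - length (ps i)) (0, 0)) = r" if "i < m" for i
    using that by simp
  define a where "a i k = fst ((ps i @ replicate (r - length (ps i)) (0, 0)) ! k)" for i k
  define b where "b i k = snd ((ps i @ replicate (r - length (ps i)) (0, 0)) ! k)" for i k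
  show ?thesis
  proof (rule that)
    show "r \<ge> 1" by (simp add: r_def)
    fix i j assume ij: "i < m" "j < m"
    show "(\<Sum>k<r. cinner (a i k) (T j (b i k))) = (if j = i then 1 else 0)"
      using ps[OF ij] pair_functional_nth[of "ps i @ replicate (r - length (ps i)) (0, 0)" "T j",
          unfolded len[OF ij(1)]]
      by (simp only: a_def b_def pair_functional_append pair_functional_replicate_zero add_0_right)
  qed
qed

lemma indep_ops_normalized_dual_pairs:
  fixes T :: "nat \<Rightarrow> 'a \<Rightarrow> 'a::complex_inner"
  assumes ind: "clin_indep_ops m T" and lin: "\<And>j. j < m \<Longrightarrow> clinear (T j)"
  obtains r :: nat and M :: real and a b where "r \<ge> 1" "M \<ge> 1"
    "\<And>i k. i < m \<Longrightarrow> k < r \<Longrightarrow> norm (a i k) \<le> 1 \<and> norm (b i k) \<le> 1"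
    "\<And>i j. i < m \<Longrightarrow> j < m \<Longrightarrow>
       (\<Sum>k<r. cinner (a i k) (T j (b i k))) = complex_of_real (1 / M\<^sup>2) * (if j = i then 1 else 0)"
proof -
  obtain r :: nat and a b where r: "r \<ge> 1"
    and dual: "\<And>i j. i < m \<Longrightarrow> j < m \<Longrightarrow> (\<Sum>k<r. cinner (a i k) (T j (b i k))) = (if j = i then 1 else 0)"
    using indep_ops_dual_pairs[OF ind] by blast
  define M where "M = 1 + (\<Sum>i<m. \<Sum>k<r. norm (a i k) + norm (b i k))"
  have M: "M \<ge> 1" unfolding M_def by (simp add: sum_nonneg)
  have bound: "norm (a i k) \<le> M \<and> norm (b i k) \<le> M" if "i < m" "k < r" for i k
  proof -
    have "norm (a i k) + norm (b i k) \<le> (\<Sum>k<r. norm (a i k) + norm (b i k))"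
      using member_le_sum[of k "{..<r}" "\<lambda>k. norm (a i k) + norm (b i k)"] that by simp
    also have "\<dots> \<le> (\<Sum>i<m. \<Sum>k<r. norm (a i k) + norm (b i k))"
      using that by (intro member_le_sum[where f="\<lambda>i. \<Sum>k<r. norm (a i k) + norm (b i k)"]) (auto intro: sum_nonneg)
    finally show ?thesis unfolding M_def using norm_ge_zero[of "a i k"] norm_ge_zero[of "b i k"] by linarith
  qed
  define s where "s = complex_of_real (1 / M)"
  have s: "cmod s = 1 / M" "cnj s * s = complex_of_real (1 / M\<^sup>2)"
    using M by (simp_all add: s_def norm_divide power2_eq_square)
  show ?thesis
  proof (rule that[OF r M])
    fix i k assume "i < m" "k < r"
    thus "norm (s *\<^sub>C a i k) \<le> 1 \<and> norm (s *\<^sub>C b i k) \<le> 1"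
      using bound M by (simp add: norm_scaleC s field_simps)
  next
    fix i j assume ij: "i < m" "j < m"
    have "(\<Sum>k<r. cinner (s *\<^sub>C a i k) (T j (s *\<^sub>C b i k))) =
        (cnj s * s) * (\<Sum>k<r. cinner (a i k) (T j (b i k)))"
      by (simp add: clinear_scaleC[OF lin[OF ij(2)]] cinner_scaleC_left cinner_scaleC_right
          sum_distrib_left ac_simps)
    thus "(\<Sum>k<r. cinner (s *\<^sub>C a i k) (T j (s *\<^sub>C b i k))) =
        complex_of_real (1 / M\<^sup>2) * (if j = i then 1 else 0)"
      by (simp only: dual[OF ij] s(2))
  qed
qed

section \<open>Calkin spaces\<close>

lemma c0_bounded: assumes "\<alpha> \<in> c0" shows "\<exists>K. \<forall>k. cmod (\<alpha> k) \<le> K"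
proof -
  have "Bseq \<alpha>" using assms unfolding c0_def by (intro convergent_imp_Bseq) (auto simp: convergent_def)
  thus ?thesis unfolding Bseq_def by blast
qed

definition rearr_levels :: "(nat \<Rightarrow> complex) \<Rightarrow> nat \<Rightarrow> real set" where
  "rearr_levels \<alpha> n = {t. 0 \<le> t \<and> finite {k. cmod (\<alpha> k) > t} \<and> card {k. cmod (\<alpha> k) > t} \<le> n}"

lemma decr_rearr_eq_Inf: "decr_rearr \<alpha> n = Inf (rearr_levels \<alpha> n)"
  by (simp add: decr_rearr_def rearr_levels_def)

lemma rearr_levels_nonempty: "\<alpha> \<in> c0 \<Longrightarrow> rearr_levels \<alpha> n \<noteq> {}"
proof -
  assume "\<alpha> \<in> c0"
  then obtain K where K: "\<And>k. cmod (\<alpha> k) \<le> K" using c0_bounded by blast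
  have K': "cmod (\<alpha> k) \<le> max K 0" for k using K[of k] by linarith
  have e: "{k. cmod (\<alpha> k) > max K 0} = {}" using K' by (meson Collect_empty_eq not_less)
  have "max K 0 \<in> rearr_levels \<alpha> n" unfolding rearr_levels_def mem_Collect_eq e by simp
  thus ?thesis by blast
qed

lemma decr_rearr_mono:
  assumes "\<beta> \<in> c0" "\<gamma> \<in> c0" "\<And>k. cmod (\<beta> k) \<le> cmod (\<gamma> k)"
  shows "decr_rearr \<beta> n \<le> decr_rearr \<gamma> n"
  unfolding decr_rearr_eq_Inf
proof (rule cInf_superset_mono)
  show "rearr_levels \<gamma> n \<noteq> {}" by (rule rearr_levels_nonempty[OF assms(2)])
  show "bdd_below (rearr_levels \<beta> n)" unfolding rearr_levels_def bdd_below_def by auto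
  show "rearr_levels \<gamma> n \<subseteq> rearr_levels \<beta> n"
  proof
    fix t assume t: "t \<in> rearr_levels \<gamma> n"
    have sub: "{k. cmod (\<beta> k) > t} \<subseteq> {k. cmod (\<gamma> k) > t}" using assms(3) by (auto intro: less_le_trans)
    have f: "finite {k. cmod (\<gamma> k) > t}" using t unfolding rearr_levels_def by simp
    have "card {k. cmod (\<beta> k) > t} \<le> card {k. cmod (\<gamma> k) > t}" by (rule card_mono[OF f sub])
    thus "t \<in> rearr_levels \<beta> n" using t finite_subset[OF sub f] unfolding rearr_levels_def by simp
  qed
qed

lemma calkin_space_sum:
  assumes I: "calkin_space I" and J: "finite J" and f: "\<And>j. j \<in> J \<Longrightarrow> f j \<in> I"
  shows "(\<lambda>k. \<Sum>j\<in>J. f j k) \<in> I"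
  using J f
proof (induction J rule: finite_induct)
  case empty thus ?case using I by (simp add: calkin_space_def)
next
  case (insert a J)
  have "(\<lambda>k. \<Sum>j\<in>insert a J. f j k) = (\<lambda>k. f a k + (\<Sum>j\<in>J. f j k))" using insert(1,2) by simp
  also have "\<dots> \<in> I" using insert I unfolding calkin_space_def by auto
  finally show ?case .
qed

lemma filterlim_div_sequentially: assumes "r \<ge> (1::nat)" shows "filterlim (\<lambda>k. k div r) sequentially sequentially"
  unfolding filterlim_at_top
proof (intro allI)
  fix Z :: nat
  show "eventually (\<lambda>k. Z \<le> k div r) sequentially"
    unfolding eventually_sequentially
  proof (intro exI allI impI)
    fix k assume "Z * r \<le> k"
    hence "Z * r div r \<le> k div r" by (rule div_le_mono)
    thus "Z \<le> k div r" using assms by simp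
  qed
qed

lemma decr_rearr_spread:
  fixes \<alpha> :: "nat \<Rightarrow> complex"
  assumes r: "r \<ge> 1" and j: "j < r"
  shows "decr_rearr (\<lambda>k. if k mod r = j then \<alpha> (k div r) else 0) n = decr_rearr \<alpha> n"
proof -
  let ?\<beta> = "\<lambda>k. if k mod r = j then \<alpha> (k div r) else 0"
  have levels: "{k. cmod (?\<beta> k) > t} = (\<lambda>q. q * r + j) ` {q. cmod (\<alpha> q) > t}" if t: "t \<ge> 0" for t
  proof (intro equalityI subsetI)
    fix k assume "k \<in> {k. cmod (?\<beta> k) > t}"
    hence k: "k mod r = j" "cmod (\<alpha> (k div r)) > t" using t by (auto split: if_splits)
    have "k = (k div r) * r + j" using k(1) div_mult_mod_eq[of k r] by simp
    thus "k \<in> (\<lambda>q. q * r + j) ` {q. cmod (\<alpha> q) > t}" using k(2) by blast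
  next
    fix k assume "k \<in> (\<lambda>q. q * r + j) ` {q. cmod (\<alpha> q) > t}"
    then obtain q where q: "k = q * r + j" "cmod (\<alpha> q) > t" by blast
    have "k mod r = j" "k div r = q" using q(1) j by simp_all
    thus "k \<in> {k. cmod (?\<beta> k) > t}" using q(2) by simp
  qed
  have inj: "inj_on (\<lambda>q. q * r + j) S" for S using r by (auto intro!: inj_onI)
  have "rearr_levels ?\<beta> n = rearr_levels \<alpha> n"
    unfolding rearr_levels_def
  proof (rule Collect_cong)
    fix t
    show "(0 \<le> t \<and> finite {k. cmod (?\<beta> k) > t} \<and> card {k. cmod (?\<beta> k) > t} \<le> n) =
          (0 \<le> t \<and> finite {k. cmod (\<alpha> k) > t} \<and> card {k. cmod (\<alpha> k) > t} \<le> n)"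
      by (cases "0 \<le> t") (simp_all only: levels finite_image_iff[OF inj] card_image[OF inj] simp_thms)
  qed
  thus ?thesis unfolding decr_rearr_eq_Inf by simp
qed

text \<open>Repeating every term r times keeps a sequence in a Calkin space: it is the sum of
  the r sequences carrying the terms at the positions k with k mod r = j, each of which
  has the same non-increasing rearrangement as the original.\<close>

lemma calkin_space_stretch:
  assumes I: "calkin_space I" and \<alpha>: "\<alpha> \<in> I" and r: "r \<ge> 1"
  shows "(\<lambda>k. \<alpha> (k div r)) \<in> I"
proof -
  have \<alpha>0: "\<alpha> \<longlonglongrightarrow> 0" using I \<alpha> unfolding calkin_space_def c0_def by blast
  have stretched0: "(\<lambda>k. \<alpha> (k div r)) \<longlonglongrightarrow> 0"
    by (rule filterlim_compose[OF \<alpha>0 filterlim_div_sequentially[OF r]])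
  have piece: "(\<lambda>k. if k mod r = j then \<alpha> (k div r) else 0) \<in> I" if j: "j < r" for j
  proof -
    have "(\<lambda>k. if k mod r = j then \<alpha> (k div r) else 0) \<in> c0"
      unfolding c0_def by (rule CollectI, rule Lim_null_comparison[OF _ tendsto_norm_zero[OF stretched0]]) simp
    moreover have "\<forall>n. decr_rearr (\<lambda>k. if k mod r = j then \<alpha> (k div r) else 0) n \<le> decr_rearr \<alpha> n"
      by (simp add: decr_rearr_spread[OF r j])
    ultimately show ?thesis using I \<alpha> unfolding calkin_space_def by blast
  qed
  have "(\<lambda>k. \<Sum>j\<in>{..<r}. if k mod r = j then \<alpha> (k div r) else 0) \<in> I"
    by (rule calkin_space_sum[OF I]) (auto intro: piece)
  moreover have "(\<Sum>j\<in>{..<r}. if k mod r = j then \<alpha> (k div r) else 0) = \<alpha> (k div r)" for k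
    using r by (simp add: sum.delta)
  ultimately show ?thesis by simp
qed

lemma calkin_space_approx_num:
  fixes T :: "'a::complex_inner \<Rightarrow> 'b::complex_inner" and h :: "nat \<Rightarrow> real"
  assumes T: "bounded_clinear T" and r: "r \<ge> 1"
    and bound: "\<forall>n\<ge>1. approx_num (r * n - r + 1) T \<le> C * h n"
    and I: "calkin_space I" and h: "(\<lambda>n. complex_of_real (h (Suc n))) \<in> I"
  shows "(\<lambda>n. complex_of_real (approx_num (Suc n) T)) \<in> I"
proof -
  define \<gamma> where "\<gamma> k = complex_of_real C * complex_of_real (h (Suc (k div r)))" for k
  have "(\<lambda>n. complex_of_real C * complex_of_real (h (Suc n))) \<in> I"
    using I h unfolding calkin_space_def by blast
  hence \<gamma>: "\<gamma> \<in> I" unfolding \<gamma>_def by (rule calkin_space_stretch[OF I _ r])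
  hence \<gamma>0: "\<gamma> \<longlonglongrightarrow> 0" using I unfolding calkin_space_def c0_def by blast
  have le: "cmod (complex_of_real (approx_num (Suc k) T)) \<le> cmod (\<gamma> k)" for k
  proof -
    have "approx_num (Suc k) T \<le> approx_num (r * Suc (k div r) - r + 1) T"
      by (rule approx_num_antimono[OF T]) (simp_all add: mult.commute)
    also have "\<dots> \<le> C * h (Suc (k div r))" using bound[rule_format, of "Suc (k div r)"] by simp
    also have "\<dots> \<le> cmod (\<gamma> k)" by (simp add: \<gamma>_def norm_mult abs_mult[symmetric])
    finally show ?thesis using approx_num_nonneg[OF T, of "Suc k"] by simp
  qed
  have c0: "(\<lambda>n. complex_of_real (approx_num (Suc n) T)) \<in> c0"
    unfolding c0_def
    by (rule CollectI, rule Lim_null_comparison[OF always_eventually[OF allI[OF le]] tendsto_norm_zero[OF \<gamma>0]])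
  show ?thesis
    using I \<gamma> c0 decr_rearr_mono[OF c0 _ le] unfolding calkin_space_def by blast
qed

section \<open>Factorisations through compressions of Phi\<close>

definition hilbert_contractions :: "('h::chilbert_space \<Rightarrow> 'h) set \<Rightarrow> (('h \<Rightarrow> 'h) \<Rightarrow> 'k::chilbert_space) \<Rightarrow> ('k \<Rightarrow> ('h \<Rightarrow> 'h)) \<Rightarrow> bool" where
  "hilbert_contractions \<A> P Q \<longleftrightarrow> (\<forall>X\<in>\<A>. \<forall>Y\<in>\<A>. P (\<lambda>h. X h + Y h) = P X + P Y) \<and>
     (\<forall>c. \<forall>X\<in>\<A>. P (\<lambda>h. c *\<^sub>C X h) = c *\<^sub>C P X) \<and>
     (\<forall>X\<in>\<A>. norm (P X) \<le> onorm X) \<and>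
     (\<forall>x. Q x \<in> \<A>) \<and>
     (\<forall>x y. Q (x + y) = (\<lambda>h. Q x h + Q y h)) \<and>
     (\<forall>c x. Q (c *\<^sub>C x) = (\<lambda>h. c *\<^sub>C Q x h)) \<and>
     (\<forall>x. onorm (Q x) \<le> norm x)"

lemma hilbert_num_eq_Sup:
  "hilbert_num TYPE('k::chilbert_space) \<A> \<Phi> n = Sup {approx_num n (\<lambda>x::'k. P (\<Phi> (Q x))) | P Q. hilbert_contractions \<A> P Q}"
  unfolding hilbert_num_def hilbert_contractions_def by simp

lemma bounded_clinear_rank_one: "bounded_clinear (\<lambda>h. cinner a h *\<^sub>C (b::'a::complex_inner))"
proof (rule bounded_clinearI[where K="norm a * norm b"])
  show "clinear (\<lambda>h. cinner a h *\<^sub>C b)"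
    by (rule clinearI) (simp_all add: cinner_add_right cinner_scaleC_right scaleC_add_left scaleC_scaleC)
  fix h
  have "norm (cinner a h *\<^sub>C b) = cmod (cinner a h) * norm b" by (rule norm_scaleC)
  also have "\<dots> \<le> (norm a * norm h) * norm b" by (intro mult_right_mono cinner_Cauchy_Schwarz) simp
  finally show "norm (cinner a h *\<^sub>C b) \<le> norm h * (norm a * norm b)" by (simp add: algebra_simps)
qed

lemma onorm_rank_one_le: "onorm (\<lambda>h. cinner a h *\<^sub>C (b::'a::complex_inner)) \<le> norm a * norm b"
proof (rule onorm_bound)
  fix h
  have "norm (cinner a h *\<^sub>C b) = cmod (cinner a h) * norm b" by (rule norm_scaleC)
  also have "\<dots> \<le> (norm a * norm h) * norm b" by (intro mult_right_mono cinner_Cauchy_Schwarz) simp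
  finally show "norm (cinner a h *\<^sub>C b) \<le> norm a * norm b * norm h" by (simp add: algebra_simps)
qed simp

lemma bounded_linear_scaleC_left: "bounded_linear (\<lambda>c::complex. c *\<^sub>C (b::'a::complex_inner))"
proof (rule bounded_linear_intro[where K="norm b"])
  fix x y :: complex and r :: real
  show "(x + y) *\<^sub>C b = x *\<^sub>C b + y *\<^sub>C b" by (rule scaleC_add_left)
  show "(r *\<^sub>R x) *\<^sub>C b = r *\<^sub>R (x *\<^sub>C b)" by (simp add: scaleR_scaleC scaleC_scaleC scaleR_conv_of_real)
  show "norm (x *\<^sub>C b) \<le> norm x * norm b" by (simp add: norm_scaleC)
qed

lemma compact_op_rank_one: "compact_op (\<lambda>h. cinner a h *\<^sub>C (b::'a::chilbert_space))"
  unfolding compact_op_def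
proof (intro conjI bounded_clinear_rank_one)
  define K where "K = (\<lambda>c. c *\<^sub>C b) ` cball (0::complex) (norm a)"
  have cK: "compact K" unfolding K_def
    by (rule compact_continuous_image[OF linear_continuous_on[OF bounded_linear_scaleC_left] compact_cball])
  have sub: "(\<lambda>h. cinner a h *\<^sub>C b) ` cball 0 1 \<subseteq> K"
  proof
    fix y assume "y \<in> (\<lambda>h. cinner a h *\<^sub>C b) ` cball 0 1"
    then obtain h where h: "norm h \<le> 1" "y = cinner a h *\<^sub>C b" by auto
    have "cmod (cinner a h) \<le> norm a * norm h" by (rule cinner_Cauchy_Schwarz)
    also have "\<dots> \<le> norm a" using h(1) by (simp add: mult_left_le)
    finally show "y \<in> K" unfolding K_def using h(2) by auto
  qed
  have "closure ((\<lambda>h. cinner a h *\<^sub>C b) ` cball 0 1) \<subseteq> K"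
    by (rule closure_minimal[OF sub compact_imp_closed[OF cK]])
  hence e: "closure ((\<lambda>h. cinner a h *\<^sub>C b) ` cball 0 1) = K \<inter> closure ((\<lambda>h. cinner a h *\<^sub>C b) ` cball 0 1)" by blast
  show "compact (closure ((\<lambda>h. cinner a h *\<^sub>C b) ` cball 0 1))"
    by (subst e) (rule compact_Int_closed[OF cK closed_closure])
qed

lemma elem_op_rank_one:
  assumes "\<And>j. j < m \<Longrightarrow> clinear (A j)"
  shows "elem_op m A B (\<lambda>h. cinner a h *\<^sub>C y) x = (\<Sum>j<m. cinner a (B j x) *\<^sub>C A j y)"
  unfolding elem_op_def using assms by (intro sum.cong refl) (simp add: clinear_scaleC)

lemma sum_elem_op_rank_one_dual:
  assumes lin: "\<And>j. j < m \<Longrightarrow> clinear (A j)" and i: "i < m"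
    and dual: "\<And>j. j < m \<Longrightarrow> (\<Sum>k<r. cinner (a k) (B j (b k))) = c * (if j = i then 1 else 0)"
  shows "(\<Sum>k<r. elem_op m A B (\<lambda>h. cinner (a k) h *\<^sub>C y) (b k)) = c *\<^sub>C A i y"
proof -
  have "(\<Sum>k<r. elem_op m A B (\<lambda>h. cinner (a k) h *\<^sub>C y) (b k)) =
      (\<Sum>k<r. \<Sum>j<m. cinner (a k) (B j (b k)) *\<^sub>C A j y)"
    by (simp add: elem_op_rank_one[OF lin])
  also have "\<dots> = (\<Sum>j<m. (\<Sum>k<r. cinner (a k) (B j (b k))) *\<^sub>C A j y)"
    unfolding scaleC_sum_left by (rule sum.swap)
  also have "\<dots> = (\<Sum>j<m. if j = i then c *\<^sub>C A j y else 0)"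
    by (intro sum.cong refl) (simp add: dual)
  also have "\<dots> = c *\<^sub>C A i y" using i by simp
  finally show ?thesis .
qed

lemma sum_cinner_elem_op_rank_one_dual:
  assumes lin: "\<And>j. j < m \<Longrightarrow> clinear (A j)" and i: "i < m"
    and dual: "\<And>j. j < m \<Longrightarrow> (\<Sum>k<r. cinner (a k) (A j (b k))) = c * (if j = i then 1 else 0)"
  shows "(\<Sum>k<r. cinner (a k) (elem_op m A B (\<lambda>h. cinner z h *\<^sub>C b k) x)) = c * cinner z (B i x)"
proof -
  have "(\<Sum>k<r. cinner (a k) (elem_op m A B (\<lambda>h. cinner z h *\<^sub>C b k) x)) =
      (\<Sum>k<r. \<Sum>j<m. cinner z (B j x) * cinner (a k) (A j (b k)))"
    by (simp add: elem_op_rank_one[OF lin] cinner_sum_right cinner_scaleC_right)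
  also have "\<dots> = (\<Sum>j<m. cinner z (B j x) * (\<Sum>k<r. cinner (a k) (A j (b k))))"
    unfolding sum_distrib_left by (rule sum.swap)
  also have "\<dots> = (\<Sum>j<m. if j = i then c * cinner z (B i x) else 0)"
    by (intro sum.cong refl) (simp add: dual)
  also have "\<dots> = c * cinner z (B i x)" using i by simp
  finally show ?thesis .
qed

lemma cinner_transpose_op:
  fixes E :: "nat \<Rightarrow> 'a::chilbert_space"
  assumes o: "orthonormal_seq E" and X: "bounded_clinear X"
  shows "cinner (E n) (transpose_op E X y) = cinner (conj_coords E y) (X (E n))"
  unfolding transpose_op_def cinner_expansion[OF o square_summable_op_coeffs[OF X o]]
  by (simp add: clinear_zero[OF bounded_clinear_clinear[OF X]])

lemma basis_transfer_transpose_op: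
  fixes E :: "nat \<Rightarrow> 'a::chilbert_space"
  assumes "orthonormal_seq E" "bounded_clinear X"
  shows "basis_transfer E F (transpose_op E X y) = expansion F (\<lambda>n. cinner (conj_coords E y) (X (E n)))"
  unfolding basis_transfer_def by (simp add: cinner_transpose_op[OF assms])

lemma norm_expansion_op_coeffs_le:
  fixes e :: "nat \<Rightarrow> 'a::complex_inner" and u :: "nat \<Rightarrow> 'b::chilbert_space"
  assumes e: "orthonormal_seq e" and u: "orthonormal_seq u" and X: "bounded_clinear X"
    and a: "norm a \<le> 1"
  shows "norm (expansion u (\<lambda>n. cinner a (X (e n)))) \<le> onorm X"
proof (rule norm_expansion_le[OF u _ onorm_nonneg[OF X]])
  fix N
  have "(\<Sum>n<N. (cmod (cinner a (X (e n))))\<^sup>2) \<le> (onorm X * norm a)\<^sup>2"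
    by (rule sum_square_op_coeffs_le[OF X e])
  also have "\<dots> \<le> (onorm X)\<^sup>2"
    using a onorm_nonneg[OF X] by (intro power_mono) (auto simp: mult_left_le)
  finally show "(\<Sum>n<N. (cmod (cinner a (X (e n))))\<^sup>2) \<le> (onorm X)\<^sup>2" .
qed

lemma separable_embeds_into_infinite_dim:
  assumes "separable_type TYPE('h)" and "\<not> cfinite_dim TYPE('k)"
  obtains e :: "nat \<Rightarrow> 'h::chilbert_space" and u :: "nat \<Rightarrow> 'k::chilbert_space"
  where "orthonormal_seq e" "total_seq e" "orthonormal_seq u" "\<And>n. u n \<noteq> 0"
proof -
  obtain D :: "'h set" where "countable D" "closure D = UNIV"
    using assms(1) unfolding separable_type_def by blast
  then obtain e :: "nat \<Rightarrow> 'h" where "orthonormal_seq e" "total_seq e"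
    using separable_total_orthonormal_seq by blast
  moreover obtain u :: "nat \<Rightarrow> 'k" where "orthonormal_seq u" "\<And>n. u n \<noteq> 0"
    using infinite_dim_orthonormal_seq[OF assms(2)] by blast
  ultimately show ?thesis using that by blast
qed

lemma basis_transfer_retraction:
  fixes e :: "nat \<Rightarrow> 'a::chilbert_space" and u :: "nat \<Rightarrow> 'b::chilbert_space"
  assumes e: "orthonormal_seq e" "total_seq e" and u: "orthonormal_seq u" "\<And>n. u n \<noteq> 0"
  shows "bounded_clinear (basis_transfer e u)" "onorm (basis_transfer e u) \<le> 1"
    "bounded_clinear (basis_transfer u e)" "onorm (basis_transfer u e) \<le> 1"
    "\<And>x. basis_transfer u e (basis_transfer e u x) = x"
  using bounded_clinear_basis_transfer[OF e(1) u(1)] onorm_basis_transfer_le[OF e(1) u(1)]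
    bounded_clinear_basis_transfer[OF u(1) e(1)] onorm_basis_transfer_le[OF u(1) e(1)]
    basis_transfer_inverse[OF e u] by auto

locale elementary_operator =
  fixes \<A> :: "('h::chilbert_space \<Rightarrow> 'h) set" and A B :: "nat \<Rightarrow> 'h \<Rightarrow> 'h" and m :: nat
  assumes cstar: "cstar_subalgebra \<A>" and coeffs_mem: "\<forall>i<m. A i \<in> \<A> \<and> B i \<in> \<A>"
begin

lemma bounded_clinear_of_mem: "X \<in> \<A> \<Longrightarrow> bounded_clinear X"
  using cstar unfolding cstar_subalgebra_def by blast

lemma bounded_clinear_A: "i < m \<Longrightarrow> bounded_clinear (A i)"
  using coeffs_mem bounded_clinear_of_mem by blast

lemma bounded_clinear_B: "i < m \<Longrightarrow> bounded_clinear (B i)"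
  using coeffs_mem bounded_clinear_of_mem by blast

lemma elem_op_mem:
  assumes X: "X \<in> \<A>"
  shows "elem_op m A B X \<in> \<A>"
proof -
  have add: "\<forall>S\<in>\<A>. \<forall>T\<in>\<A>. (\<lambda>x. S x + T x) \<in> \<A>" and comp: "\<forall>S\<in>\<A>. \<forall>T\<in>\<A>. S \<circ> T \<in> \<A>"
    using cstar unfolding cstar_subalgebra_def by blast+
  have "(\<lambda>x. \<Sum>i<m'. A i (X (B i x))) \<in> \<A>" if "m' \<le> m" for m'
    using that
  proof (induction m')
    case 0
    thus ?case using cstar unfolding cstar_subalgebra_def by simp
  next
    case (Suc m')
    have "A m' \<in> \<A>" "B m' \<in> \<A>" using coeffs_mem Suc.prems by auto
    hence "A m' \<circ> (X \<circ> B m') \<in> \<A>" using comp X by blast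
    moreover have "(\<lambda>x. \<Sum>i<m'. A i (X (B i x))) \<in> \<A>" using Suc by simp
    ultimately have "(\<lambda>x. (\<lambda>x. \<Sum>i<m'. A i (X (B i x))) x + (A m' \<circ> (X \<circ> B m')) x) \<in> \<A>"
      by (intro add[rule_format])
    thus ?case by (simp add: o_def)
  qed
  thus ?thesis unfolding elem_op_def by simp
qed

lemma elem_op_add: "elem_op m A B (\<lambda>h. X h + Y h) = (\<lambda>h. elem_op m A B X h + elem_op m A B Y h)"
  unfolding elem_op_def
  by (rule ext) (simp add: clinear_add[OF bounded_clinear_clinear[OF bounded_clinear_A]] sum.distrib)

lemma elem_op_scaleC: "elem_op m A B (\<lambda>h. c *\<^sub>C X h) = (\<lambda>h. c *\<^sub>C elem_op m A B X h)"
  unfolding elem_op_def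
  by (rule ext) (simp add: clinear_scaleC[OF bounded_clinear_clinear[OF bounded_clinear_A]] scaleC_sum_right)

definition coeff_norm_sum :: real where
  "coeff_norm_sum = (\<Sum>i<m. onorm (A i) * onorm (B i))"

lemma coeff_norm_sum_nonneg: "coeff_norm_sum \<ge> 0"
  unfolding coeff_norm_sum_def by (intro sum_nonneg) (simp add: onorm_nonneg bounded_clinear_A bounded_clinear_B)

lemma bounded_clinear_elem_op:
  assumes X: "bounded_clinear X"
  shows "bounded_clinear (elem_op m A B X)"
  unfolding elem_op_def
  by (intro bounded_clinear_sum bounded_clinear_compose[OF bounded_clinear_A bounded_clinear_compose[OF X bounded_clinear_B]]) auto

lemma onorm_elem_op_le:
  assumes X: "bounded_clinear X"
  shows "onorm (elem_op m A B X) \<le> coeff_norm_sum * onorm X"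
proof -
  have "onorm (elem_op m A B X) \<le> (\<Sum>i\<in>{..<m}. onorm (\<lambda>x. A i (X (B i x))))"
    unfolding elem_op_def
    by (rule onorm_sum) (auto intro!: bounded_clinear_bounded_linear
        bounded_clinear_compose[OF bounded_clinear_A bounded_clinear_compose[OF X bounded_clinear_B]])
  also have "\<dots> \<le> (\<Sum>i\<in>{..<m}. onorm (A i) * onorm X * onorm (B i))"
    by (intro sum_mono) (simp add: onorm_compose3_le[OF bounded_clinear_A X bounded_clinear_B])
  also have "\<dots> = coeff_norm_sum * onorm X"
    unfolding coeff_norm_sum_def sum_distrib_right by (simp add: algebra_simps)
  finally show ?thesis .
qed

lemma norm_compressed_elem_op_le:
  assumes PQ: "hilbert_contractions \<A> P Q"
  shows "norm (P (elem_op m A B (Q x))) \<le> coeff_norm_sum * norm x"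
proof -
  have Q: "Q x \<in> \<A>" using PQ unfolding hilbert_contractions_def by blast
  have "norm (P (elem_op m A B (Q x))) \<le> onorm (elem_op m A B (Q x))"
    using PQ elem_op_mem[OF Q] unfolding hilbert_contractions_def by blast
  also have "\<dots> \<le> coeff_norm_sum * onorm (Q x)" by (rule onorm_elem_op_le[OF bounded_clinear_of_mem[OF Q]])
  also have "\<dots> \<le> coeff_norm_sum * norm x"
    using PQ coeff_norm_sum_nonneg unfolding hilbert_contractions_def by (simp add: mult_left_mono)
  finally show ?thesis .
qed

lemma bounded_clinear_compressed_elem_op:
  assumes PQ: "hilbert_contractions \<A> P Q"
  shows "bounded_clinear (\<lambda>x. P (elem_op m A B (Q x)))"
proof (rule bounded_clinearI[where K=coeff_norm_sum])
  have Q: "Q x \<in> \<A>" for x using PQ unfolding hilbert_contractions_def by blast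
  show "clinear (\<lambda>x. P (elem_op m A B (Q x)))"
  proof (rule clinearI)
    fix x y
    have "P (elem_op m A B (Q (x + y))) = P (\<lambda>h. elem_op m A B (Q x) h + elem_op m A B (Q y) h)"
      using PQ unfolding hilbert_contractions_def by (simp add: elem_op_add)
    also have "\<dots> = P (elem_op m A B (Q x)) + P (elem_op m A B (Q y))"
      using PQ elem_op_mem[OF Q] unfolding hilbert_contractions_def by blast
    finally show "P (elem_op m A B (Q (x + y))) = P (elem_op m A B (Q x)) + P (elem_op m A B (Q y))" .
  next
    fix c x
    have "P (elem_op m A B (Q (c *\<^sub>C x))) = P (\<lambda>h. c *\<^sub>C elem_op m A B (Q x) h)"
      using PQ unfolding hilbert_contractions_def by (simp add: elem_op_scaleC)
    also have "\<dots> = c *\<^sub>C P (elem_op m A B (Q x))"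
      using PQ elem_op_mem[OF Q] unfolding hilbert_contractions_def by blast
    finally show "P (elem_op m A B (Q (c *\<^sub>C x))) = c *\<^sub>C P (elem_op m A B (Q x))" .
  qed
  show "norm (P (elem_op m A B (Q x))) \<le> norm x * coeff_norm_sum" for x
    using norm_compressed_elem_op_le[OF PQ] by (simp add: mult.commute)
qed

lemma approx_num_compressed_le_hilbert_num:
  fixes P :: "('h \<Rightarrow> 'h) \<Rightarrow> 'k::chilbert_space"
  assumes PQ: "hilbert_contractions \<A> P Q" and n: "n \<ge> 1"
  shows "approx_num n (\<lambda>x. P (elem_op m A B (Q x))) \<le> hilbert_num TYPE('k) \<A> (elem_op m A B) n"
  unfolding hilbert_num_eq_Sup
proof (rule cSup_upper)
  show "approx_num n (\<lambda>x. P (elem_op m A B (Q x))) \<in>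
      {approx_num n (\<lambda>x::'k. P (elem_op m A B (Q x))) |P Q. hilbert_contractions \<A> P Q}"
    using PQ by blast
  have "approx_num n (\<lambda>x::'k. P' (elem_op m A B (Q' x))) \<le> coeff_norm_sum"
    if PQ': "hilbert_contractions \<A> P' Q'" for P' Q'
  proof -
    have "approx_num n (\<lambda>x::'k. P' (elem_op m A B (Q' x))) \<le> onorm (\<lambda>x. P' (elem_op m A B (Q' x)))"
      by (rule approx_num_le_onorm[OF bounded_clinear_compressed_elem_op[OF PQ'] n])
    also have "\<dots> \<le> coeff_norm_sum"
      by (rule onorm_bound[OF coeff_norm_sum_nonneg norm_compressed_elem_op_le[OF PQ']])
    finally show ?thesis .
  qed
  thus "bdd_above {approx_num n (\<lambda>x::'k. P (elem_op m A B (Q x))) |P Q. hilbert_contractions \<A> P Q}"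
    unfolding bdd_above_def by blast
qed

lemma hilbert_num_nonneg:
  assumes n: "n \<ge> 1"
  shows "0 \<le> hilbert_num TYPE('k::chilbert_space) \<A> (elem_op m A B) n"
proof -
  have zero: "hilbert_contractions \<A> (\<lambda>_. 0 :: 'k) (\<lambda>_ _. 0)"
    using cstar unfolding hilbert_contractions_def cstar_subalgebra_def
    by (auto simp: onorm_zero intro: onorm_nonneg bounded_clinear_of_mem)
  show ?thesis
    using approx_num_nonneg[OF bounded_clinear_compressed_elem_op[OF zero] n]
      approx_num_compressed_le_hilbert_num[OF zero n] by linarith
qed

lemma approx_num_factor_le_hilbert_num:
  fixes P :: "nat \<Rightarrow> ('h \<Rightarrow> 'h) \<Rightarrow> 'k::chilbert_space" and Q :: "nat \<Rightarrow> 'k \<Rightarrow> ('h \<Rightarrow> 'h)"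
    and S :: "'k \<Rightarrow> 'b::complex_inner" and U :: "'a::complex_inner \<Rightarrow> 'k"
  assumes PQ: "\<And>k. k < r \<Longrightarrow> hilbert_contractions \<A> (P k) (Q k)" and n: "n \<ge> 1"
    and S: "bounded_clinear S" and U: "bounded_clinear U"
    and factor: "\<And>x. X x = S (\<Sum>k<r. P k (elem_op m A B (Q k (U x))))"
  shows "approx_num (r * n - r + 1) X \<le> onorm S * onorm U * (real r * hilbert_num TYPE('k) \<A> (elem_op m A B) n)"
proof -
  let ?h = "hilbert_num TYPE('k) \<A> (elem_op m A B) n"
  define T where "T k x = P k (elem_op m A B (Q k x))" for k x
  have T: "bounded_clinear (T k)" if "k < r" for k
    unfolding T_def by (rule bounded_clinear_compressed_elem_op[OF PQ[OF that]])
  have "X = (\<lambda>x. S ((\<lambda>y. \<Sum>k<r. T k y) (U x)))" by (rule ext) (simp add: factor T_def)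
  hence "approx_num (r * n - r + 1) X \<le> onorm S * approx_num (r * n - r + 1) (\<lambda>x. \<Sum>k<r. T k x) * onorm U"
    using approx_num_compose_le[OF S bounded_clinear_sum[of "{..<r}" T] U] T by simp
  also have "approx_num (r * n - r + 1) (\<lambda>x. \<Sum>k<r. T k x) \<le> (\<Sum>k<r. approx_num n (T k))"
    by (rule approx_num_sum_le[OF T n]) simp
  also have "\<dots> \<le> real r * ?h"
    using sum_mono[of "{..<r}" "\<lambda>k. approx_num n (T k)" "\<lambda>_. ?h"]
      approx_num_compressed_le_hilbert_num[OF PQ n] unfolding T_def by simp
  finally have "approx_num (r * n - r + 1) X \<le> onorm S * (real r * ?h) * onorm U"
    by (simp add: mult_left_mono mult_right_mono onorm_nonneg S U)
  thus ?thesis by (simp add: algebra_simps)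
qed

lemma hilbert_num_bound_of_factorization:
  fixes T :: "nat \<Rightarrow> 'a::complex_inner \<Rightarrow> 'b::complex_inner"
    and P :: "nat \<Rightarrow> nat \<Rightarrow> ('h \<Rightarrow> 'h) \<Rightarrow> 'k::chilbert_space" and Q :: "nat \<Rightarrow> nat \<Rightarrow> 'k \<Rightarrow> ('h \<Rightarrow> 'h)"
    and S :: "'k \<Rightarrow> 'b" and U :: "'a \<Rightarrow> 'k"
  assumes r: "r \<ge> 1"
    and PQ: "\<And>i k. i < m \<Longrightarrow> k < r \<Longrightarrow> hilbert_contractions \<A> (P i k) (Q i k)"
    and S: "bounded_clinear S" and U: "bounded_clinear U"
    and factor: "\<And>i x. i < m \<Longrightarrow> T i x = S (\<Sum>k<r. P i k (elem_op m A B (Q i k (U x))))"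
  shows "\<exists>r C. r \<ge> 1 \<and> C > 0 \<and> (\<forall>n\<ge>1. \<forall>i<m.
           approx_num (r * n - r + 1) (T i) \<le> C * hilbert_num TYPE('k) \<A> (elem_op m A B) n)"
proof (intro exI conjI allI impI)
  let ?h = "hilbert_num TYPE('k) \<A> (elem_op m A B)"
  show "r \<ge> 1" by (rule r)
  show "(onorm S * onorm U + 1) * real r > 0"
    using r onorm_nonneg[OF S] onorm_nonneg[OF U] by (simp add: add_nonneg_pos)
  fix n i :: nat assume n: "n \<ge> 1" and i: "i < m"
  have "approx_num (r * n - r + 1) (T i) \<le> onorm S * onorm U * (real r * ?h n)"
    by (rule approx_num_factor_le_hilbert_num[OF PQ[OF i] n S U factor[OF i]])
  also have "\<dots> \<le> (onorm S * onorm U + 1) * real r * ?h n"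
    using hilbert_num_nonneg[OF n, where 'k='k] by (simp add: algebra_simps)
  finally show "approx_num (r * n - r + 1) (T i) \<le> (onorm S * onorm U + 1) * real r * ?h n" .
qed

lemma hilbert_contractions_left:
  fixes V :: "'h \<Rightarrow> 'k::chilbert_space" and W :: "'k \<Rightarrow> 'h"
  assumes cpt: "{T. compact_op T} \<subseteq> \<A>"
    and V: "bounded_clinear V" "onorm V \<le> 1" and W: "bounded_clinear W" "onorm W \<le> 1"
    and a: "norm a \<le> 1" and b: "norm b \<le> 1"
  shows "hilbert_contractions \<A> (\<lambda>Y. V (Y b)) (\<lambda>x h. cinner a h *\<^sub>C W x)"
  unfolding hilbert_contractions_def
proof (intro conjI ballI allI)
  fix X Y show "V (X b + Y b) = V (X b) + V (Y b)"
    by (rule clinear_add[OF bounded_clinear_clinear[OF V(1)]])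
next
  fix c X show "V (c *\<^sub>C X b) = c *\<^sub>C V (X b)"
    by (rule clinear_scaleC[OF bounded_clinear_clinear[OF V(1)]])
next
  fix X assume "X \<in> \<A>"
  hence X: "bounded_clinear X" by (rule bounded_clinear_of_mem)
  have "norm (V (X b)) \<le> onorm V * norm (X b)" by (rule norm_le_onorm[OF V(1)])
  also have "\<dots> \<le> norm (X b)" using V(2) onorm_nonneg[OF V(1)] by (simp add: mult_left_le_one_le)
  also have "\<dots> \<le> onorm X * norm b" by (rule norm_le_onorm[OF X])
  also have "\<dots> \<le> onorm X" using b onorm_nonneg[OF X] by (simp add: mult_left_le)
  finally show "norm (V (X b)) \<le> onorm X" by simp
next
  fix x show "(\<lambda>h. cinner a h *\<^sub>C W x) \<in> \<A>" using cpt compact_op_rank_one by blast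
next
  fix x y show "(\<lambda>h. cinner a h *\<^sub>C W (x + y)) = (\<lambda>h. cinner a h *\<^sub>C W x + cinner a h *\<^sub>C W y)"
    by (simp add: clinear_add[OF bounded_clinear_clinear[OF W(1)]] scaleC_add_right)
next
  fix c x show "(\<lambda>h. cinner a h *\<^sub>C W (c *\<^sub>C x)) = (\<lambda>h. c *\<^sub>C (cinner a h *\<^sub>C W x))"
    by (simp add: clinear_scaleC[OF bounded_clinear_clinear[OF W(1)]] scaleC_scaleC mult.commute)
next
  fix x
  have "onorm (\<lambda>h. cinner a h *\<^sub>C W x) \<le> norm a * norm (W x)" by (rule onorm_rank_one_le)
  also have "\<dots> \<le> norm (W x)" using a by (simp add: mult_left_le_one_le)
  also have "\<dots> \<le> onorm W * norm x" by (rule norm_le_onorm[OF W(1)])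
  also have "\<dots> \<le> norm x" using W(2) onorm_nonneg[OF W(1)] by (simp add: mult_left_le_one_le)
  finally show "onorm (\<lambda>h. cinner a h *\<^sub>C W x) \<le> norm x" by simp
qed

lemma hilbert_contractions_right:
  fixes e :: "nat \<Rightarrow> 'h" and u :: "nat \<Rightarrow> 'k::chilbert_space" and W :: "'k \<Rightarrow> 'h"
  assumes cpt: "{T. compact_op T} \<subseteq> \<A>"
    and e: "orthonormal_seq e" and u: "orthonormal_seq u" and W: "bounded_clinear W" "onorm W \<le> 1"
    and a: "norm a \<le> 1" and b: "norm b \<le> 1"
  shows "hilbert_contractions \<A> (\<lambda>Y. expansion u (\<lambda>n. cinner a (Y (e n))))
    (\<lambda>x h. cinner (conj_coords e (W x)) h *\<^sub>C b)"
  unfolding hilbert_contractions_def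
proof (intro conjI ballI allI)
  fix X Y assume "X \<in> \<A>" "Y \<in> \<A>"
  thus "expansion u (\<lambda>n. cinner a (X (e n) + Y (e n))) =
      expansion u (\<lambda>n. cinner a (X (e n))) + expansion u (\<lambda>n. cinner a (Y (e n)))"
    unfolding cinner_add_right
    by (intro expansion_add[OF u] square_summable_op_coeffs[OF bounded_clinear_of_mem e])
next
  fix c X assume "X \<in> \<A>"
  thus "expansion u (\<lambda>n. cinner a (c *\<^sub>C X (e n))) = c *\<^sub>C expansion u (\<lambda>n. cinner a (X (e n)))"
    unfolding cinner_scaleC_right
    by (intro expansion_scaleC[OF u] square_summable_op_coeffs[OF bounded_clinear_of_mem e])
next
  fix X assume "X \<in> \<A>"
  hence X: "bounded_clinear X" by (rule bounded_clinear_of_mem)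
  show "norm (expansion u (\<lambda>n. cinner a (X (e n)))) \<le> onorm X"
    by (rule norm_expansion_op_coeffs_le[OF e u X a])
next
  fix x show "(\<lambda>h. cinner (conj_coords e (W x)) h *\<^sub>C b) \<in> \<A>" using cpt compact_op_rank_one by blast
next
  fix x y
  show "(\<lambda>h. cinner (conj_coords e (W (x + y))) h *\<^sub>C b) =
      (\<lambda>h. cinner (conj_coords e (W x)) h *\<^sub>C b + cinner (conj_coords e (W y)) h *\<^sub>C b)"
    by (simp add: clinear_add[OF bounded_clinear_clinear[OF W(1)]] conj_coords_add[OF e]
        cinner_add_left scaleC_add_left)
next
  fix c x
  show "(\<lambda>h. cinner (conj_coords e (W (c *\<^sub>C x))) h *\<^sub>C b) =
      (\<lambda>h. c *\<^sub>C (cinner (conj_coords e (W x)) h *\<^sub>C b))"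
    by (simp add: clinear_scaleC[OF bounded_clinear_clinear[OF W(1)]] conj_coords_scaleC[OF e]
        cinner_scaleC_left scaleC_scaleC)
next
  fix x
  have "onorm (\<lambda>h. cinner (conj_coords e (W x)) h *\<^sub>C b) \<le> norm (conj_coords e (W x)) * norm b"
    by (rule onorm_rank_one_le)
  also have "\<dots> \<le> norm (conj_coords e (W x))" using b by (simp add: mult_left_le)
  also have "\<dots> \<le> norm (W x)" by (rule norm_conj_coords_le[OF e])
  also have "\<dots> \<le> onorm W * norm x" by (rule norm_le_onorm[OF W(1)])
  also have "\<dots> \<le> norm x" using W(2) onorm_nonneg[OF W(1)] by (simp add: mult_left_le_one_le)
  finally show "onorm (\<lambda>h. cinner (conj_coords e (W x)) h *\<^sub>C b) \<le> norm x" by simp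
qed

lemma transpose_op_factorization:
  fixes e :: "nat \<Rightarrow> 'h" and u :: "nat \<Rightarrow> 'k::chilbert_space"
  assumes e: "orthonormal_seq e" and u: "orthonormal_seq u" and i: "i < m"
    and dual: "\<And>j. j < m \<Longrightarrow> (\<Sum>k<r. cinner (a k) (A j (b k))) = c * (if j = i then 1 else 0)"
  shows "(\<Sum>k<r. expansion u (\<lambda>n. cinner (a k)
      (elem_op m A B (\<lambda>h. cinner (conj_coords e x) h *\<^sub>C b k) (e n)))) =
    c *\<^sub>C basis_transfer e u (transpose_op e (B i) x)"
proof -
  let ?z = "conj_coords e x"
  have "(\<Sum>k<r. expansion u (\<lambda>n. cinner (a k) (elem_op m A B (\<lambda>h. cinner ?z h *\<^sub>C b k) (e n)))) =
      expansion u (\<lambda>n. \<Sum>k<r. cinner (a k) (elem_op m A B (\<lambda>h. cinner ?z h *\<^sub>C b k) (e n)))"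
    by (rule expansion_sum[OF u, symmetric])
      (intro square_summable_op_coeffs[OF bounded_clinear_elem_op[OF bounded_clinear_rank_one] e])
  also have "\<dots> = expansion u (\<lambda>n. c * cinner ?z (B i (e n)))"
    by (simp only: sum_cinner_elem_op_rank_one_dual[OF bounded_clinear_clinear[OF bounded_clinear_A] i dual])
  also have "\<dots> = c *\<^sub>C basis_transfer e u (transpose_op e (B i) x)"
    unfolding basis_transfer_transpose_op[OF e bounded_clinear_B[OF i]]
    by (rule expansion_scaleC[OF u square_summable_op_coeffs[OF bounded_clinear_B[OF i] e]])
  finally show ?thesis .
qed

lemma approx_num_left_coeff_le_hilbert_num:
  assumes sep: "separable_type TYPE('h)" and cpt: "{T. compact_op T} \<subseteq> \<A>"
    and kinf: "\<not> cfinite_dim TYPE('k::chilbert_space)" and ind: "clin_indep_ops m B"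
  shows "\<exists>r C. r \<ge> 1 \<and> C > 0 \<and> (\<forall>n\<ge>1. \<forall>i<m.
           approx_num (r * n - r + 1) (A i) \<le> C * hilbert_num TYPE('k) \<A> (elem_op m A B) n)"
proof -
  obtain e :: "nat \<Rightarrow> 'h" and u :: "nat \<Rightarrow> 'k" where e: "orthonormal_seq e" "total_seq e"
    and u: "orthonormal_seq u" "\<And>n. u n \<noteq> 0"
    using separable_embeds_into_infinite_dim[OF sep kinf] by blast
  define V where "V = basis_transfer e u"
  define W where "W = basis_transfer u e"
  note VW = basis_transfer_retraction[OF e u, folded V_def W_def]
  obtain r :: nat and M :: real and a b where r: "r \<ge> 1" and M: "M \<ge> 1"
    and ab: "\<And>i k. i < m \<Longrightarrow> k < r \<Longrightarrow> norm (a i k) \<le> 1 \<and> norm (b i k) \<le> 1"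
    and dual: "\<And>i j. i < m \<Longrightarrow> j < m \<Longrightarrow>
      (\<Sum>k<r. cinner (a i k) (B j (b i k))) = complex_of_real (1 / M\<^sup>2) * (if j = i then 1 else 0)"
    using indep_ops_normalized_dual_pairs[OF ind bounded_clinear_clinear[OF bounded_clinear_B]] by blast
  define S where "S y = W (complex_of_real (M\<^sup>2) *\<^sub>C y)" for y
  have S: "bounded_clinear S"
    unfolding S_def by (rule bounded_clinear_compose[OF VW(3) bounded_clinear_scaleC[OF bounded_clinear_ident]])
  have factor: "A i x = S (\<Sum>k<r. V (elem_op m A B (\<lambda>h. cinner (a i k) h *\<^sub>C W (V x)) (b i k)))"
    if i: "i < m" for i x
  proof -
    have "(\<Sum>k<r. V (elem_op m A B (\<lambda>h. cinner (a i k) h *\<^sub>C x) (b i k))) =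
        V (complex_of_real (1 / M\<^sup>2) *\<^sub>C A i x)"
      unfolding clinear_sum[OF bounded_clinear_clinear[OF VW(1)], symmetric]
      by (rule arg_cong[where f=V], rule sum_elem_op_rank_one_dual[OF _ i dual[OF i]])
        (rule bounded_clinear_clinear[OF bounded_clinear_A])
    thus ?thesis using M
      by (simp add: S_def VW(5) clinear_scaleC[OF bounded_clinear_clinear[OF VW(1)]] scaleC_scaleC
          scaleC_one of_real_mult[symmetric] del: of_real_mult)
  qed
  show ?thesis
  proof (rule hilbert_num_bound_of_factorization[where P="\<lambda>i k Y. V (Y (b i k))"
        and Q="\<lambda>i k x h. cinner (a i k) h *\<^sub>C W x", OF r _ S VW(1) factor])
    fix i k assume "i < m" "k < r"
    thus "hilbert_contractions \<A> (\<lambda>Y. V (Y (b i k))) (\<lambda>x h. cinner (a i k) h *\<^sub>C W x)"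
      using ab by (intro hilbert_contractions_left[OF cpt VW(1-4)]) auto
  qed
qed

text \<open>With the dual system of the A j the compressions read off the matrix coefficients
  <z, B i (e n)>, so they factor the transpose of B i rather than B i itself.\<close>

lemma approx_num_right_coeff_le_hilbert_num:
  assumes sep: "separable_type TYPE('h)" and cpt: "{T. compact_op T} \<subseteq> \<A>"
    and kinf: "\<not> cfinite_dim TYPE('k::chilbert_space)" and ind: "clin_indep_ops m A"
  shows "\<exists>r C. r \<ge> 1 \<and> C > 0 \<and> (\<forall>n\<ge>1. \<forall>i<m.
           approx_num (r * n - r + 1) (B i) \<le> C * hilbert_num TYPE('k) \<A> (elem_op m A B) n)"
proof -
  obtain e :: "nat \<Rightarrow> 'h" and u :: "nat \<Rightarrow> 'k" where e: "orthonormal_seq e" "total_seq e"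
    and u: "orthonormal_seq u" "\<And>n. u n \<noteq> 0"
    using separable_embeds_into_infinite_dim[OF sep kinf] by blast
  define V where "V = basis_transfer e u"
  define W where "W = basis_transfer u e"
  note VW = basis_transfer_retraction[OF e u, folded V_def W_def]
  obtain r :: nat and M :: real and a b where r: "r \<ge> 1" and M: "M \<ge> 1"
    and ab: "\<And>i k. i < m \<Longrightarrow> k < r \<Longrightarrow> norm (a i k) \<le> 1 \<and> norm (b i k) \<le> 1"
    and dual: "\<And>i j. i < m \<Longrightarrow> j < m \<Longrightarrow>
      (\<Sum>k<r. cinner (a i k) (A j (b i k))) = complex_of_real (1 / M\<^sup>2) * (if j = i then 1 else 0)"
    using indep_ops_normalized_dual_pairs[OF ind bounded_clinear_clinear[OF bounded_clinear_A]] by blast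
  define S where "S y = W (complex_of_real (M\<^sup>2) *\<^sub>C y)" for y
  have S: "bounded_clinear S"
    unfolding S_def by (rule bounded_clinear_compose[OF VW(3) bounded_clinear_scaleC[OF bounded_clinear_ident]])
  have factor: "transpose_op e (B i) x = S (\<Sum>k<r. expansion u (\<lambda>n. cinner (a i k)
      (elem_op m A B (\<lambda>h. cinner (conj_coords e (W (V x))) h *\<^sub>C b i k) (e n))))"
    if i: "i < m" for i x
  proof -
    have "(\<Sum>k<r. expansion u (\<lambda>n. cinner (a i k)
        (elem_op m A B (\<lambda>h. cinner (conj_coords e x) h *\<^sub>C b i k) (e n)))) =
        complex_of_real (1 / M\<^sup>2) *\<^sub>C V (transpose_op e (B i) x)"
      unfolding V_def by (rule transpose_op_factorization[OF e(1) u(1) i dual[OF i]])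
    thus ?thesis using M
      by (simp add: S_def VW(5) scaleC_scaleC scaleC_one of_real_mult[symmetric] del: of_real_mult)
  qed
  have "\<exists>r C. r \<ge> 1 \<and> C > 0 \<and> (\<forall>n\<ge>1. \<forall>i<m.
      approx_num (r * n - r + 1) (transpose_op e (B i)) \<le> C * hilbert_num TYPE('k) \<A> (elem_op m A B) n)"
  proof (rule hilbert_num_bound_of_factorization[where P="\<lambda>i k Y. expansion u (\<lambda>n. cinner (a i k) (Y (e n)))"
        and Q="\<lambda>i k x h. cinner (conj_coords e (W x)) h *\<^sub>C b i k", OF r _ S VW(1) factor])
    fix i k assume "i < m" "k < r"
    thus "hilbert_contractions \<A> (\<lambda>Y. expansion u (\<lambda>n. cinner (a i k) (Y (e n))))
        (\<lambda>x h. cinner (conj_coords e (W x)) h *\<^sub>C b i k)"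
      using ab by (intro hilbert_contractions_right[OF cpt e(1) u(1) VW(3,4)]) auto
  qed
  moreover have "approx_num N (B i) \<le> approx_num N (transpose_op e (B i))" if "i < m" "N \<ge> 1" for i N
    by (rule approx_num_le_transpose_op[OF e bounded_clinear_B[OF that(1)] that(2)])
  ultimately show ?thesis by (meson le_add2 order_trans)
qed

end

lemma calkin_space_sing_seq:
  fixes T :: "nat \<Rightarrow> 'h::chilbert_space \<Rightarrow> 'h"
  assumes T: "\<And>i. i < m \<Longrightarrow> bounded_clinear (T i)"
    and bound: "\<exists>r C. r \<ge> 1 \<and> C > 0 \<and>
      (\<forall>n\<ge>1. \<forall>i<m. approx_num (r * n - r + 1) (T i) \<le> C * hilbert_num K \<A> \<Phi> n)"
  shows "\<forall>I. calkin_space I \<and> hilb_seq K \<A> \<Phi> \<in> I \<longrightarrow> (\<forall>i<m. sing_seq (T i) \<in> I)"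
proof (intro allI impI)
  fix I i assume I: "calkin_space I \<and> hilb_seq K \<A> \<Phi> \<in> I" and i: "i < m"
  obtain r C where r: "r \<ge> 1"
    and bound: "\<forall>n\<ge>1. \<forall>i<m. approx_num (r * n - r + 1) (T i) \<le> C * hilbert_num K \<A> \<Phi> n"
    using bound by blast
  have "\<forall>n\<ge>1. approx_num (r * n - r + 1) (T i) \<le> C * hilbert_num K \<A> \<Phi> n" using bound i by blast
  with calkin_space_approx_num[OF T[OF i] r] I
  show "sing_seq (T i) \<in> I" unfolding sing_seq_def[abs_def] hilb_seq_def[abs_def] by blast
qed

theorem proposition4p5:
  fixes \<A> :: "('h::chilbert_space \<Rightarrow> 'h) set"
    and A B :: "nat \<Rightarrow> 'h \<Rightarrow> 'h"
    and m :: nat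
  assumes sep: "separable_type TYPE('h)"
    and alg: "cstar_subalgebra \<A>"
    and cpt: "{T. compact_op T} \<subseteq> \<A>"
    and AB: "\<forall>i<m. A i \<in> \<A> \<and> B i \<in> \<A>"
    and kinf: "\<not> cfinite_dim TYPE('k::chilbert_space)"
  shows
   "(clin_indep_ops m B \<longrightarrow>
       (\<exists>r::nat. \<exists>C::real. r \<ge> 1 \<and> C > 0 \<and>
          (\<forall>n\<ge>1. \<forall>i<m. approx_num (r * n - r + 1) (A i)
                        \<le> C * hilbert_num TYPE('k) \<A> (elem_op m A B) n)) \<and>
       (\<forall>I. calkin_space I \<and> hilb_seq TYPE('k) \<A> (elem_op m A B) \<in> I
             \<longrightarrow> (\<forall>i<m. sing_seq (A i) \<in> I))) \<and>
    (clin_indep_ops m A \<longrightarrow>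
       (\<exists>r::nat. \<exists>C::real. r \<ge> 1 \<and> C > 0 \<and>
          (\<forall>n\<ge>1. \<forall>i<m. approx_num (r * n - r + 1) (B i)
                        \<le> C * hilbert_num TYPE('k) \<A> (elem_op m A B) n)) \<and>
       (\<forall>I. calkin_space I \<and> hilb_seq TYPE('k) \<A> (elem_op m A B) \<in> I
             \<longrightarrow> (\<forall>i<m. sing_seq (B i) \<in> I)))"
proof -
  interpret elementary_operator \<A> A B m using alg AB by unfold_locales
  show ?thesis
    by (intro conjI impI calkin_space_sing_seq approx_num_left_coeff_le_hilbert_num[OF sep cpt kinf]
        approx_num_right_coeff_le_hilbert_num[OF sep cpt kinf])
      (auto intro: bounded_clinear_A bounded_clinear_B)
qed

end
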